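(* For every atomic flow $A$ there is an atomic flow $B$ such that $A\to_{\mathsf c}^\star B$ and every $\mathsf{ai}$-cycle in $B$ is a fragile cycle.
   Context: An atomic flow is a tuple $(V,E,\eta,up,lo)$: finite sets of vertices and edges, a labelling of vertices by interaction, cut, weakening, coweakening, contraction or cocontraction, and maps $up:E\to V\cup\{\top\}$, $lo:E\to V\cup\{\bot\}$. Upper edges of $\nu$: $lo(\epsilon)=\nu$; lower edges: $up(\epsilon)=\nu$. (Upper, lower) edge numbers: $(0,2)$ interaction, $(2,0)$ cut, $(0,1)$ weakening, $(1,0)$ coweakening, $(2,1)$ contraction, $(1,2)$ cocontraction; no directed cycles; there is $\pi:E\to\{+,-\}$ giving all edges of a (co)contraction the same sign and the two edges of an interaction/cut different signs. A path from $\nu$ to $\nu'$ is a sequence of edges $\epsilon_1,\dots,\epsilon_h$ with $lo(\epsilon_i)=up(\epsilon_{i+1})$, $up(\epsilon_1)=\nu$, $lo(\epsilon_h)=\nu'$; its reversal is a path from $\nu'$ to $\nu$. An $\mathsf{ai}$-path from $\nu$ to $\nu'$ is either a path from $\nu$ to $\nu'$ or a sequence $\epsilon_1,\dots,\epsilon_k,\epsilon_{k+1},\dots,\epsilon_h$ with $\epsilon_k\neq\epsilon_{k+1}$ such that, for some interaction or cut vertex $\nu''$, $\epsilon_1,\dots,\epsilon_k$ is an $\mathsf{ai}$-path from $\nu$ to $\nu''$ and $\epsilon_{k+1},\dots,\epsilon_h$ is an $\mathsf{ai}$-path from $\nu''$ to $\nu'$. An $\mathsf{ai}$-cycle is an $\mathsf{ai}$-path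 from a vertex to itself in which no edge appears twice. A simple edge is an edge whose upper endpoint is an interaction and whose lower endpoint is a cut. A fragile cycle is an $\mathsf{ai}$-cycle containing a simple edge. $\to_{\mathsf c}^\star$ is the reflexive-transitive closure of $\to_{\mathsf c}$, where $A\to_{\mathsf c}B$ means $B$ results from $A$ by one of these subgraph replacements: (c1) a contraction with upper edges $\epsilon_1,\epsilon_2$ whose lower edge is an upper edge of a cut with other upper edge $\epsilon_3$: replace by a new cocontraction with upper edge $\epsilon_3$ and new lower edges $\delta_1,\delta_2$, and two new cuts with upper edges $\{\epsilon_1,\delta_1\}$ and $\{\epsilon_2,\delta_2\}$; (c2) an interaction with lower edges $\epsilon_3,\epsilon_4$ where $\epsilon_4$ is the upper edge of a cocontraction with lower edges $\epsilon_1,\epsilon_2$: replace by a new contraction with lower edge $\epsilon_3$ and new upper edges $\delta_1,\delta_2$, and two new interactions with lower edges $\{\epsilon_1,\delta_1\}$ and $\{\epsilon_2,\delta_2\}$; (c3) a contraction with upper edges $\epsilon_1,\epsilon_2$ whose lower edge is the upper edge of a cocontraction with lower edges $\epsilon_3,\epsilon_4$: replace by cocontractions $\kappa_1,\kappa_2$ with upper edges $\epsilon_1,\epsilon_2$, contractions $\gamma_3,\gamma_4$ with lower edges $\epsilon_3,\epsilon_4$, and four new edges, one from each $\kappa_i$ to each $\gamma_j$. *)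

theory Defs
  imports Main
begin

text \<open>Vertices and edges are natural numbers (so that the rewriting
steps can always pick fresh names). The endpoints of an edge are of type node:
Top stands for the upper boundary, Bot for the lower boundary, Nd v for vertex v.\<close>

datatype kind = Interaction | Cut | Weakening | Coweakening | Contraction | Cocontraction

datatype node = Top | Bot | Nd nat

record flow =
  fV :: "nat set"
  fE :: "nat set"
  lab :: "nat \<Rightarrow> kind"
  up :: "nat \<Rightarrow> node"
  lo :: "nat \<Rightarrow> node"

fun n_upper :: "kind \<Rightarrow> nat" where
  "n_upper Interaction = 0"
| "n_upper Cut = 2"
| "n_upper Weakening = 0"
| "n_upper Coweakening = 1"
| "n_upper Contraction = 2"
| "n_upper Cocontraction = 1"

fun n_lower :: "kind \<Rightarrow> nat" where
  "n_lower Interaction = 2"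
| "n_lower Cut = 0"
| "n_lower Weakening = 1"
| "n_lower Coweakening = 0"
| "n_lower Contraction = 1"
| "n_lower Cocontraction = 2"

definition upper_edges :: "flow \<Rightarrow> nat \<Rightarrow> nat set" where
  "upper_edges G v = {e \<in> fE G. lo G e = Nd v}"

definition lower_edges :: "flow \<Rightarrow> nat \<Rightarrow> nat set" where
  "lower_edges G v = {e \<in> fE G. up G e = Nd v}"

definition atomic_flow :: "flow \<Rightarrow> bool" where
  "atomic_flow G \<longleftrightarrow>
     finite (fV G) \<and> finite (fE G) \<and>
     (\<forall>e\<in>fE G. up G e \<in> insert Top (Nd ` fV G) \<and> lo G e \<in> insert Bot (Nd ` fV G)) \<and>
     (\<forall>v\<in>fV G. card (upper_edges G v) = n_upper (lab G v) \<and>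
                card (lower_edges G v) = n_lower (lab G v)) \<and>
     acyclic {(u, w). \<exists>e\<in>fE G. up G e = Nd u \<and> lo G e = Nd w} \<and>
     (\<exists>\<pi> :: nat \<Rightarrow> bool.
        \<forall>v\<in>fV G.
          (lab G v \<in> {Contraction, Cocontraction} \<longrightarrow>
             (\<forall>e\<in>upper_edges G v \<union> lower_edges G v. \<forall>e'\<in>upper_edges G v \<union> lower_edges G v.
                \<pi> e = \<pi> e')) \<and>
          (lab G v \<in> {Interaction, Cut} \<longrightarrow>
             (\<forall>e\<in>upper_edges G v \<union> lower_edges G v. \<forall>e'\<in>upper_edges G v \<union> lower_edges G v.
                e \<noteq> e' \<longrightarrow> \<pi> e \<noteq> \<pi> e')))"

definition dpath :: "flow \<Rightarrow> nat \<Rightarrow> nat list \<Rightarrow> nat \<Rightarrow> bool" where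
  "dpath G v xs w \<longleftrightarrow> xs \<noteq> [] \<and> set xs \<subseteq> fE G \<and>
     up G (hd xs) = Nd v \<and> lo G (last xs) = Nd w \<and>
     (\<forall>i. Suc i < length xs \<longrightarrow> lo G (xs ! i) = up G (xs ! Suc i))"

definition path :: "flow \<Rightarrow> nat \<Rightarrow> nat list \<Rightarrow> nat \<Rightarrow> bool" where
  "path G v xs w \<longleftrightarrow> dpath G v xs w \<or> dpath G w (rev xs) v"

inductive aipath :: "flow \<Rightarrow> nat \<Rightarrow> nat list \<Rightarrow> nat \<Rightarrow> bool" for G where
  base: "path G v xs w \<Longrightarrow> aipath G v xs w"
| join: "aipath G v xs u \<Longrightarrow> aipath G u ys w \<Longrightarrow> u \<in> fV G \<Longrightarrow>
         lab G u \<in> {Interaction, Cut} \<Longrightarrow> last xs \<noteq> hd ys \<Longrightarrow> aipath G v (xs @ ys) w"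

definition aicycle :: "flow \<Rightarrow> nat \<Rightarrow> nat list \<Rightarrow> bool" where
  "aicycle G v xs \<longleftrightarrow> v \<in> fV G \<and> aipath G v xs v \<and> distinct xs"

definition simple_edge :: "flow \<Rightarrow> nat \<Rightarrow> bool" where
  "simple_edge G e \<longleftrightarrow> e \<in> fE G \<and>
     (\<exists>u w. u \<in> fV G \<and> w \<in> fV G \<and> up G e = Nd u \<and> lab G u = Interaction \<and>
            lo G e = Nd w \<and> lab G w = Cut)"

definition fragile_cycle :: "flow \<Rightarrow> nat \<Rightarrow> nat list \<Rightarrow> bool" where
  "fragile_cycle G v xs \<longleftrightarrow> aicycle G v xs \<and> (\<exists>e\<in>set xs. simple_edge G e)"

definition c1_step :: "flow \<Rightarrow> flow \<Rightarrow> bool" where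
  "c1_step A B \<longleftrightarrow> (\<exists>g k e1 e2 e e3 k' x1 x2 d1 d2.
     g \<in> fV A \<and> lab A g = Contraction \<and> k \<in> fV A \<and> lab A k = Cut \<and>
     e1 \<in> fE A \<and> e2 \<in> fE A \<and> e1 \<noteq> e2 \<and> lo A e1 = Nd g \<and> lo A e2 = Nd g \<and>
     e \<in> fE A \<and> up A e = Nd g \<and> lo A e = Nd k \<and>
     e3 \<in> fE A \<and> e3 \<noteq> e \<and> lo A e3 = Nd k \<and>
     k' \<notin> fV A \<and> x1 \<notin> fV A \<and> x2 \<notin> fV A \<and> distinct [k', x1, x2] \<and>
     d1 \<notin> fE A \<and> d2 \<notin> fE A \<and> d1 \<noteq> d2 \<and>
     B = A\<lparr> fV := (fV A - {g, k}) \<union> {k', x1, x2},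
            fE := (fE A - {e}) \<union> {d1, d2},
            lab := (lab A)(k' := Cocontraction, x1 := Cut, x2 := Cut),
            up := (up A)(d1 := Nd k', d2 := Nd k'),
            lo := (lo A)(e3 := Nd k', e1 := Nd x1, d1 := Nd x1, e2 := Nd x2, d2 := Nd x2) \<rparr>)"

definition c2_step :: "flow \<Rightarrow> flow \<Rightarrow> bool" where
  "c2_step A B \<longleftrightarrow> (\<exists>i k e1 e2 e3 e4 g' i1 i2 d1 d2.
     i \<in> fV A \<and> lab A i = Interaction \<and> k \<in> fV A \<and> lab A k = Cocontraction \<and>
     e3 \<in> fE A \<and> e4 \<in> fE A \<and> e3 \<noteq> e4 \<and> up A e3 = Nd i \<and> up A e4 = Nd i \<and>
     lo A e4 = Nd k \<and>
     e1 \<in> fE A \<and> e2 \<in> fE A \<and> e1 \<noteq> e2 \<and> up A e1 = Nd k \<and> up A e2 = Nd k \<and>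
     g' \<notin> fV A \<and> i1 \<notin> fV A \<and> i2 \<notin> fV A \<and> distinct [g', i1, i2] \<and>
     d1 \<notin> fE A \<and> d2 \<notin> fE A \<and> d1 \<noteq> d2 \<and>
     B = A\<lparr> fV := (fV A - {i, k}) \<union> {g', i1, i2},
            fE := (fE A - {e4}) \<union> {d1, d2},
            lab := (lab A)(g' := Contraction, i1 := Interaction, i2 := Interaction),
            up := (up A)(e3 := Nd g', e1 := Nd i1, d1 := Nd i1, e2 := Nd i2, d2 := Nd i2),
            lo := (lo A)(d1 := Nd g', d2 := Nd g') \<rparr>)"

definition c3_step :: "flow \<Rightarrow> flow \<Rightarrow> bool" where
  "c3_step A B \<longleftrightarrow> (\<exists>g k e1 e2 e e3 e4 k1 k2 g3 g4 d13 d14 d23 d24.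
     g \<in> fV A \<and> lab A g = Contraction \<and> k \<in> fV A \<and> lab A k = Cocontraction \<and>
     e1 \<in> fE A \<and> e2 \<in> fE A \<and> e1 \<noteq> e2 \<and> lo A e1 = Nd g \<and> lo A e2 = Nd g \<and>
     e \<in> fE A \<and> up A e = Nd g \<and> lo A e = Nd k \<and>
     e3 \<in> fE A \<and> e4 \<in> fE A \<and> e3 \<noteq> e4 \<and> up A e3 = Nd k \<and> up A e4 = Nd k \<and>
     k1 \<notin> fV A \<and> k2 \<notin> fV A \<and> g3 \<notin> fV A \<and> g4 \<notin> fV A \<and> distinct [k1, k2, g3, g4] \<and>
     d13 \<notin> fE A \<and> d14 \<notin> fE A \<and> d23 \<notin> fE A \<and> d24 \<notin> fE A \<and> distinct [d13, d14, d23, d24] \<and>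
     B = A\<lparr> fV := (fV A - {g, k}) \<union> {k1, k2, g3, g4},
            fE := (fE A - {e}) \<union> {d13, d14, d23, d24},
            lab := (lab A)(k1 := Cocontraction, k2 := Cocontraction,
                           g3 := Contraction, g4 := Contraction),
            up := (up A)(e3 := Nd g3, e4 := Nd g4,
                         d13 := Nd k1, d14 := Nd k1, d23 := Nd k2, d24 := Nd k2),
            lo := (lo A)(e1 := Nd k1, e2 := Nd k2,
                         d13 := Nd g3, d14 := Nd g4, d23 := Nd g3, d24 := Nd g4) \<rparr>)"

definition c_step :: "flow \<Rightarrow> flow \<Rightarrow> bool" where
  "c_step A B \<longleftrightarrow> c1_step A B \<or> c2_step A B \<or> c3_step A B"

end

theory Submission
  imports Defs
begin

text \<open>Fix a polarity \<open>\<pi>\<close> and an integer rank \<open>\<rho>\<close> increasing along every edge, and call a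
  redex of c1, c2 or c3 positive when the edge joining its two vertices is positive. Reducing
  positive redexes terminates: weigh every positive contraction \<open>3 ^ (R - \<rho>)\<close> and every positive
  cocontraction \<open>3 ^ \<rho>\<close>; c1 and c2 delete one of them, and c3 replaces a positive contraction
  above a positive cocontraction by two cocontractions at the old height of the contraction and two
  contractions at that of the cocontraction. Once no positive redex is left, every
  \<open>ai\<close>-cycle is fragile. Along a cycle the direction may only turn at interactions and cuts, and
  there the polarity flips; elsewhere the cycle passes through (co)contractions, which keep the
  polarity. Hence a maximal run of positive edges of the cycle is a directed path from an
  interaction to a cut through (co)contractions, and the lack of positive redexes forces it to be a
  single simple edge.\<close>

section \<open>Well-formed and polarised flows\<close>

definition arity_ok :: "flow \<Rightarrow> nat \<Rightarrow> bool" where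
  "arity_ok G v \<longleftrightarrow>
     card (upper_edges G v) = n_upper (lab G v) \<and> card (lower_edges G v) = n_lower (lab G v)"

definition wf_flow :: "flow \<Rightarrow> bool" where
  "wf_flow G \<longleftrightarrow> finite (fV G) \<and> finite (fE G) \<and>
     (\<forall>e\<in>fE G. up G e \<in> insert Top (Nd ` fV G) \<and> lo G e \<in> insert Bot (Nd ` fV G)) \<and>
     (\<forall>v\<in>fV G. arity_ok G v)"

definition polar_at :: "flow \<Rightarrow> (nat \<Rightarrow> bool) \<Rightarrow> nat \<Rightarrow> bool" where
  "polar_at G \<pi> v \<longleftrightarrow>
     (lab G v \<in> {Contraction, Cocontraction} \<longrightarrow>
        (\<forall>e\<in>upper_edges G v \<union> lower_edges G v. \<forall>e'\<in>upper_edges G v \<union> lower_edges G v. \<pi> e = \<pi> e')) \<and>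
     (lab G v \<in> {Interaction, Cut} \<longrightarrow>
        (\<forall>e\<in>upper_edges G v \<union> lower_edges G v. \<forall>e'\<in>upper_edges G v \<union> lower_edges G v.
           e \<noteq> e' \<longrightarrow> \<pi> e \<noteq> \<pi> e'))"

definition polarity :: "flow \<Rightarrow> (nat \<Rightarrow> bool) \<Rightarrow> bool" where
  "polarity G \<pi> \<longleftrightarrow> (\<forall>v\<in>fV G. polar_at G \<pi> v)"

definition vertex_rel :: "flow \<Rightarrow> (nat \<times> nat) set" where
  "vertex_rel G = {(u, w). \<exists>e\<in>fE G. up G e = Nd u \<and> lo G e = Nd w}"

lemma atomic_flow_iff:
  "atomic_flow G \<longleftrightarrow> wf_flow G \<and> acyclic (vertex_rel G) \<and> (\<exists>\<pi>. polarity G \<pi>)"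
  unfolding atomic_flow_def wf_flow_def arity_ok_def polarity_def polar_at_def vertex_rel_def
  by blast

lemma upper_edgesI: "e \<in> fE G \<Longrightarrow> lo G e = Nd v \<Longrightarrow> e \<in> upper_edges G v"
  and lower_edgesI: "e \<in> fE G \<Longrightarrow> up G e = Nd v \<Longrightarrow> e \<in> lower_edges G v"
  unfolding upper_edges_def lower_edges_def by auto

lemma incident_edges_subset: "upper_edges G v \<union> lower_edges G v \<subseteq> fE G"
  unfolding upper_edges_def lower_edges_def by auto

context
  fixes G :: flow
  assumes wf: "wf_flow G"
begin

lemma wf_up_vertex: "e \<in> fE G \<Longrightarrow> up G e = Nd u \<Longrightarrow> u \<in> fV G"
  and wf_lo_vertex: "e \<in> fE G \<Longrightarrow> lo G e = Nd u \<Longrightarrow> u \<in> fV G"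
  and wf_up_not_Bot: "e \<in> fE G \<Longrightarrow> up G e \<noteq> Bot"
  and wf_lo_not_Top: "e \<in> fE G \<Longrightarrow> lo G e \<noteq> Top"
  using wf unfolding wf_flow_def by fastforce+

lemma wf_junction_vertex:
  assumes "x \<in> fE G" "y \<in> fE G" "lo G x = up G y"
  shows "\<exists>u\<in>fV G. lo G x = Nd u"
proof (cases "lo G x")
  case (Nd u)
  then show ?thesis using wf_lo_vertex[OF assms(1)] by blast
qed (use assms wf_lo_not_Top wf_up_not_Bot in auto)

lemma wf_arity: "v \<in> fV G \<Longrightarrow> arity_ok G v"
  using wf unfolding wf_flow_def by blast

lemma finite_upper_edges: "finite (upper_edges G v)"
  and finite_lower_edges: "finite (lower_edges G v)"
  using wf unfolding wf_flow_def upper_edges_def lower_edges_def by auto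

lemma through_vertex_label:
  assumes "v \<in> fV G" "x \<in> upper_edges G v" "y \<in> lower_edges G v"
  shows "lab G v \<in> {Contraction, Cocontraction}"
proof -
  have "n_upper (lab G v) \<noteq> 0" "n_lower (lab G v) \<noteq> 0"
    using wf_arity[OF assms(1)] finite_upper_edges finite_lower_edges assms(2,3)
    unfolding arity_ok_def by (metis card_0_eq empty_iff)+
  then show ?thesis by (cases "lab G v") auto
qed

lemma two_upper_edges_label:
  assumes "v \<in> fV G" "x \<in> upper_edges G v" "y \<in> upper_edges G v" "x \<noteq> y"
  shows "lab G v \<in> {Cut, Contraction}"
proof -
  have "card {x, y} \<le> card (upper_edges G v)"
    using assms finite_upper_edges by (intro card_mono) auto
  then have "2 \<le> n_upper (lab G v)"
    using wf_arity[OF assms(1)] assms(4) unfolding arity_ok_def by simp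
  then show ?thesis by (cases "lab G v") auto
qed

lemma two_lower_edges_label:
  assumes "v \<in> fV G" "x \<in> lower_edges G v" "y \<in> lower_edges G v" "x \<noteq> y"
  shows "lab G v \<in> {Interaction, Cocontraction}"
proof -
  have "card {x, y} \<le> card (lower_edges G v)"
    using assms finite_lower_edges by (intro card_mono) auto
  then have "2 \<le> n_lower (lab G v)"
    using wf_arity[OF assms(1)] assms(4) unfolding arity_ok_def by simp
  then show ?thesis by (cases "lab G v") auto
qed

end

lemma polar_at_same:
  "polar_at G \<pi> v \<Longrightarrow> lab G v \<in> {Contraction, Cocontraction} \<Longrightarrow>
   x \<in> upper_edges G v \<union> lower_edges G v \<Longrightarrow> y \<in> upper_edges G v \<union> lower_edges G v \<Longrightarrow> \<pi> x = \<pi> y"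
  unfolding polar_at_def by blast

lemma polar_at_differ:
  "polar_at G \<pi> v \<Longrightarrow> lab G v \<in> {Interaction, Cut} \<Longrightarrow>
   x \<in> upper_edges G v \<union> lower_edges G v \<Longrightarrow> y \<in> upper_edges G v \<union> lower_edges G v \<Longrightarrow> x \<noteq> y \<Longrightarrow>
   \<pi> x \<noteq> \<pi> y"
  unfolding polar_at_def by blast

definition positive_redex :: "flow \<Rightarrow> (nat \<Rightarrow> bool) \<Rightarrow> bool" where
  "positive_redex G \<pi> \<longleftrightarrow> (\<exists>e\<in>fE G. \<exists>u\<in>fV G. \<exists>v\<in>fV G. \<pi> e \<and> up G e = Nd u \<and> lo G e = Nd v \<and>
     (lab G u, lab G v) \<in> {(Contraction, Cut), (Interaction, Cocontraction), (Contraction, Cocontraction)})"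

lemma positive_redexI:
  "e \<in> fE G \<Longrightarrow> \<pi> e \<Longrightarrow> up G e = Nd u \<Longrightarrow> lo G e = Nd v \<Longrightarrow> u \<in> fV G \<Longrightarrow> v \<in> fV G \<Longrightarrow>
   (lab G u, lab G v) \<in> {(Contraction, Cut), (Interaction, Cocontraction), (Contraction, Cocontraction)} \<Longrightarrow>
   positive_redex G \<pi>"
  unfolding positive_redex_def by blast

lemma positive_chain_single_edge:
  assumes wf: "wf_flow G" and irreducible: "\<not> positive_redex G \<pi>"
    and chain: "\<And>t. t \<le> L \<Longrightarrow> f t \<in> fE G \<and> \<pi> (f t)" "\<And>t. t < L \<Longrightarrow> lo G (f t) = up G (f (Suc t))"
    and start: "up G (f 0) = Nd i" "i \<in> fV G" "lab G i = Interaction"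
    and stop: "lo G (f L) = Nd k" "k \<in> fV G" "lab G k = Cut"
  shows "L = 0"
proof (rule ccontr)
  assume "L \<noteq> 0"
  have junction: "\<exists>u\<in>fV G. lo G (f t) = Nd u \<and> up G (f (Suc t)) = Nd u \<and>
      lab G u \<in> {Contraction, Cocontraction}" if t: "t < L" for t
  proof -
    have edges: "f t \<in> fE G" "f (Suc t) \<in> fE G" using chain(1) t by auto
    then obtain u where u: "u \<in> fV G" "lo G (f t) = Nd u" "up G (f (Suc t)) = Nd u"
      using wf_junction_vertex[OF wf] chain(2)[OF t] by metis
    with edges show ?thesis
      using through_vertex_label[OF wf _ upper_edgesI lower_edgesI] by blast
  qed
  \<comment> \<open>Below an interaction, a positive path can only pass through contractions.\<close>
  have contraction: "\<exists>u\<in>fV G. lo G (f t) = Nd u \<and> lab G u = Contraction" if "t < L" for t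
    using that
  proof (induction t)
    case 0
    then obtain u where u: "u \<in> fV G" "lo G (f 0) = Nd u" "lab G u \<in> {Contraction, Cocontraction}"
      using junction by blast
    have "lab G u \<noteq> Cocontraction"
      using irreducible positive_redexI[of "f 0" G \<pi> i u] chain(1)[of 0] start u by auto
    with u show ?case by auto
  next
    case (Suc t)
    then obtain u' where u': "u' \<in> fV G" "lo G (f t) = Nd u'" "lab G u' = Contraction" by auto
    then have up: "up G (f (Suc t)) = Nd u'" using chain(2)[of t] Suc.prems by simp
    obtain u where u: "u \<in> fV G" "lo G (f (Suc t)) = Nd u" "lab G u \<in> {Contraction, Cocontraction}"
      using junction[OF Suc.prems] by blast
    have "lab G u \<noteq> Cocontraction"
      using irreducible positive_redexI[of "f (Suc t)" G \<pi> u' u] chain(1)[of "Suc t"] Suc.prems u' up u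
      by auto
    with u show ?case by auto
  qed
  obtain t where t: "L = Suc t" using \<open>L \<noteq> 0\<close> not0_implies_Suc by blast
  then obtain u where "u \<in> fV G" "lo G (f t) = Nd u" "lab G u = Contraction"
    using contraction by blast
  moreover have "up G (f L) = lo G (f t)" using chain(2)[of t] t by simp
  ultimately show False
    using irreducible positive_redexI[of "f L" G \<pi> u k] chain(1)[of L] stop by auto
qed

section \<open>Cycles in flows without positive redexes\<close>

definition src :: "flow \<Rightarrow> bool \<Rightarrow> nat \<Rightarrow> node" where
  "src G d e = (if d then up G e else lo G e)"

definition tgt :: "flow \<Rightarrow> bool \<Rightarrow> nat \<Rightarrow> node" where
  "tgt G d e = (if d then lo G e else up G e)"

text \<open>An \<open>ai\<close>-path with explicit directions: \<open>ds ! j\<close> says whether \<open>xs ! j\<close> is traversed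
  downwards, and the direction may only change at an interaction or a cut.\<close>

definition ai_walk :: "flow \<Rightarrow> nat \<Rightarrow> nat list \<Rightarrow> bool list \<Rightarrow> nat \<Rightarrow> bool" where
  "ai_walk G a xs ds b \<longleftrightarrow> xs \<noteq> [] \<and> length ds = length xs \<and> set xs \<subseteq> fE G \<and>
     src G (ds ! 0) (xs ! 0) = Nd a \<and>
     tgt G (ds ! (length xs - 1)) (xs ! (length xs - 1)) = Nd b \<and>
     (\<forall>j. Suc j < length xs \<longrightarrow> tgt G (ds ! j) (xs ! j) = src G (ds ! Suc j) (xs ! Suc j) \<and>
        (ds ! j \<noteq> ds ! Suc j \<longrightarrow>
           (\<exists>u\<in>fV G. tgt G (ds ! j) (xs ! j) = Nd u \<and> lab G u \<in> {Interaction, Cut})))"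

lemma dpath_ai_walk: "dpath G a xs b \<Longrightarrow> ai_walk G a xs (replicate (length xs) True) b"
  unfolding dpath_def ai_walk_def src_def tgt_def by (auto simp: hd_conv_nth last_conv_nth)

lemma rev_dpath_ai_walk:
  assumes "dpath G b (rev xs) a"
  shows "ai_walk G a xs (replicate (length xs) False) b"
proof -
  let ?n = "length xs"
  have ne: "xs \<noteq> []" and s: "set xs \<subseteq> fE G" and h: "up G (hd (rev xs)) = Nd b"
    and l: "lo G (last (rev xs)) = Nd a"
    and c: "\<forall>i. Suc i < ?n \<longrightarrow> lo G (rev xs ! i) = up G (rev xs ! Suc i)"
    using assms unfolding dpath_def by auto
  have "lo G (xs ! 0) = Nd a" using l ne by (simp add: last_rev hd_conv_nth)
  moreover have "up G (xs ! (?n - 1)) = Nd b" using h ne by (simp add: hd_rev last_conv_nth)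
  moreover have "up G (xs ! j) = lo G (xs ! Suc j)" if "Suc j < ?n" for j
  proof -
    have "lo G (rev xs ! (?n - Suc (Suc j))) = up G (rev xs ! Suc (?n - Suc (Suc j)))"
      using c that by auto
    moreover have "rev xs ! (?n - Suc (Suc j)) = xs ! Suc j" using that by (simp add: rev_nth)
    moreover have "rev xs ! Suc (?n - Suc (Suc j)) = xs ! j" using that
      by (simp add: rev_nth Suc_diff_Suc)
    ultimately show ?thesis by simp
  qed
  ultimately show ?thesis using ne s unfolding ai_walk_def src_def tgt_def by auto
qed

lemma ai_walk_append:
  assumes w1: "ai_walk G a xs ds u" and w2: "ai_walk G u ys es b"
    and u: "u \<in> fV G" "lab G u \<in> {Interaction, Cut}"
  shows "ai_walk G a (xs @ ys) (ds @ es) b"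
proof -
  let ?n = "length xs" and ?m = "length ys"
  have n: "0 < ?n" "0 < ?m" and ld: "length ds = ?n" "length es = ?m"
    using w1 w2 unfolding ai_walk_def by auto
  have step: "tgt G ((ds @ es) ! j) ((xs @ ys) ! j) = src G ((ds @ es) ! Suc j) ((xs @ ys) ! Suc j) \<and>
      ((ds @ es) ! j \<noteq> (ds @ es) ! Suc j \<longrightarrow>
         (\<exists>u\<in>fV G. tgt G ((ds @ es) ! j) ((xs @ ys) ! j) = Nd u \<and> lab G u \<in> {Interaction, Cut}))"
    if j: "Suc j < ?n + ?m" for j
  proof (cases "Suc j < ?n")
    case True
    then show ?thesis using w1 ld by (simp add: nth_append ai_walk_def)
  next
    case False
    show ?thesis
    proof (cases "Suc j = ?n")
      case True
      then have "j = ?n - 1" by auto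
      then show ?thesis using w1 w2 ld True u n by (auto simp: nth_append ai_walk_def)
    next
      case False
      then have "?n \<le> j" using \<open>\<not> Suc j < ?n\<close> by auto
      then obtain k where k: "j = ?n + k" using le_Suc_ex by blast
      then have "Suc k < ?m" using j by auto
      then show ?thesis using w2 ld k by (simp add: nth_append ai_walk_def)
    qed
  qed
  have "(xs @ ys) ! 0 = xs ! 0" "(ds @ es) ! 0 = ds ! 0" "(ds @ es) ! (?n + k) = es ! k"
    for k using n ld by (simp_all add: nth_append)
  moreover have "length (xs @ ys) - 1 = ?n + (?m - 1)"
    unfolding length_append using n(2) by arith
  ultimately show ?thesis using step w1 w2 ld unfolding ai_walk_def by simp
qed

lemma aipath_ai_walk: "aipath G a xs b \<Longrightarrow> \<exists>ds. ai_walk G a xs ds b"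
proof (induction rule: aipath.induct)
  case (base v xs w)
  then show ?case unfolding path_def using dpath_ai_walk rev_dpath_ai_walk by blast
next
  case (join v xs u ys w)
  then show ?case using ai_walk_append by blast
qed

lemma straight_junction_vertex:
  assumes "wf_flow G" "x \<in> fE G" "y \<in> fE G" "tgt G d x = src G d y"
  shows "\<exists>u\<in>fV G. tgt G d x = Nd u"
proof (cases d)
  case True
  then show ?thesis using assms wf_junction_vertex[OF assms(1), of x y] by (simp add: src_def tgt_def)
next
  case False
  then have "up G x = lo G y" using assms(4) by (simp add: src_def tgt_def)
  then show ?thesis using False assms wf_junction_vertex[OF assms(1), of y x] by (simp add: src_def tgt_def)
qed

lemma periodic_chain_not_acyclic:
  assumes "\<And>j. (f j, f (Suc j)) \<in> r" "f n = f 0" "0 < n"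
  shows "\<not> acyclic r"
proof -
  have "(f 0, f (Suc m)) \<in> r\<^sup>+" for m
  proof (induction m)
    case 0
    then show ?case using assms(1) by blast
  next
    case (Suc m)
    then show ?case using trancl_into_trancl[OF _ assms(1)] by blast
  qed
  then have "(f 0, f 0) \<in> r\<^sup>+" using assms(2,3) by (metis Suc_pred)
  then show ?thesis unfolding acyclic_def by blast
qed

lemma false_true_false_interval:
  fixes f :: "nat \<Rightarrow> bool"
  assumes "\<not> f q" "f p" "\<not> f r" "q < p" "p < r"
  shows "\<exists>a b. Suc a < b \<and> \<not> f a \<and> \<not> f b \<and> (\<forall>t. a < t \<longrightarrow> t < b \<longrightarrow> f t)"
proof -
  define a where "a = Max {t. t < p \<and> \<not> f t}"
  define b where "b = (LEAST t. p < t \<and> \<not> f t)"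
  have fin: "finite {t. t < p \<and> \<not> f t}" and ne: "{t. t < p \<and> \<not> f t} \<noteq> {}"
    using assms(1,4) by auto
  have a: "a < p" "\<not> f a" and a_max: "\<And>t. t < p \<Longrightarrow> \<not> f t \<Longrightarrow> t \<le> a"
    using Max_in[OF fin ne] Max_ge[OF fin] unfolding a_def by auto
  have b: "p < b" "\<not> f b" and b_min: "\<And>t. p < t \<Longrightarrow> \<not> f t \<Longrightarrow> b \<le> t"
    using LeastI[of "\<lambda>t. p < t \<and> \<not> f t" r] Least_le[of "\<lambda>t. p < t \<and> \<not> f t"] assms(3,5)
    unfolding b_def by auto
  have "f t" if "a < t" "t < b" for t
    using a_max[of t] b_min[of t] assms(2) that by (cases t p rule: linorder_cases) auto
  then show ?thesis using a b by (intro exI[of _ a] exI[of _ b]) auto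
qed

text \<open>A closed \<open>ai\<close>-trail of length \<open>n\<close>, unrolled into periodic sequences: \<open>E j\<close> is
  traversed downwards iff \<open>D j\<close>, and \<open>w j\<close> is the vertex between \<open>E j\<close> and \<open>E (Suc j)\<close>.
  The trail may turn at a vertex other than an interaction or a cut only where it closes.\<close>

locale closed_trail =
  fixes G :: flow and n :: nat and E :: "nat \<Rightarrow> nat" and D :: "nat \<Rightarrow> bool" and w :: "nat \<Rightarrow> nat"
  assumes wf: "wf_flow G"
    and period: "0 < n" "\<And>j. E (j mod n) = E j" "\<And>j. D (j mod n) = D j"
    and edge: "\<And>j. E j \<in> fE G"
    and junction: "\<And>j. w j \<in> fV G" "\<And>j. tgt G (D j) (E j) = Nd (w j)"
      "\<And>j. src G (D (Suc j)) (E (Suc j)) = Nd (w j)"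
    and turn_label: "\<And>j. D j \<noteq> D (Suc j) \<Longrightarrow> Suc j mod n \<noteq> 0 \<Longrightarrow> lab G (w j) \<in> {Interaction, Cut}"
    and consecutive_distinct: "\<And>j. E j \<noteq> E (Suc j)"
begin

lemma junction_edges:
  "D j \<Longrightarrow> E j \<in> upper_edges G (w j)" "\<not> D j \<Longrightarrow> E j \<in> lower_edges G (w j)"
  "D (Suc j) \<Longrightarrow> E (Suc j) \<in> lower_edges G (w j)" "\<not> D (Suc j) \<Longrightarrow> E (Suc j) \<in> upper_edges G (w j)"
  using junction(2,3)[of j] edge unfolding src_def tgt_def upper_edges_def lower_edges_def by auto

lemma downward_edge: "D (Suc j) \<Longrightarrow> up G (E (Suc j)) = Nd (w j) \<and> lo G (E (Suc j)) = Nd (w (Suc j))"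
  and upward_edge: "\<not> D (Suc j) \<Longrightarrow> lo G (E (Suc j)) = Nd (w j) \<and> up G (E (Suc j)) = Nd (w (Suc j))"
  using junction(2)[of "Suc j"] junction(3)[of j] unfolding src_def tgt_def by auto

lemma straight_keeps_polarity:
  assumes "polarity G \<pi>" "D j = D (Suc j)"
  shows "\<pi> (E j) = \<pi> (E (Suc j))"
proof -
  have "lab G (w j) \<in> {Contraction, Cocontraction}"
    using assms(2) junction_edges through_vertex_label[OF wf junction(1)] by (cases "D j") metis+
  then show ?thesis using assms junction_edges polar_at_same junction(1)
    unfolding polarity_def by (cases "D j") blast+
qed

lemma turn_at_cut_or_interaction_flips_polarity:
  assumes "polarity G \<pi>" "D j \<noteq> D (Suc j)" "lab G (w j) \<in> {Interaction, Cut}"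
  shows "\<pi> (E j) \<noteq> \<pi> (E (Suc j))"
  using assms junction_edges consecutive_distinct polar_at_differ junction(1)
  unfolding polarity_def by (cases "D j") blast+

text \<open>Away from the closing junction, turns and polarity flips coincide; since both the
  direction and the polarity return to their initial values after one period, they also
  coincide at the closing junction.\<close>

lemma turn_iff_flip:
  assumes pol: "polarity G \<pi>"
  shows "D j \<noteq> D (Suc j) \<longleftrightarrow> \<pi> (E j) \<noteq> \<pi> (E (Suc j))"
proof -
  define c where "c j \<longleftrightarrow> (D j \<longleftrightarrow> \<pi> (E j))" for j
  have c_step: "c j = c (Suc j)" if "Suc j mod n \<noteq> 0" for j
    using straight_keeps_polarity[OF pol] turn_at_cut_or_interaction_flips_polarity[OF pol]
      turn_label[OF _ that] unfolding c_def by blast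
  have c_const: "c j = c 0" if "j < n" for j
    using that by (induction j) (use c_step in auto)
  have "c j = c (j mod n)" for j using period unfolding c_def by simp
  then have "c j = c (Suc j)" for j using c_const period(1) by (metis mod_less_divisor)
  then show ?thesis unfolding c_def by blast
qed

lemma turn_vertex_label:
  assumes "polarity G \<pi>" "D j \<noteq> D (Suc j)"
  shows "lab G (w j) = (if D j then Cut else Interaction)"
proof -
  have flip: "\<pi> (E j) \<noteq> \<pi> (E (Suc j))" using turn_iff_flip assms by blast
  have "lab G (w j) \<notin> {Contraction, Cocontraction}"
    using flip assms polar_at_same junction_edges junction(1) unfolding polarity_def
    by (cases "D j") blast+
  moreover have "lab G (w j) \<in> (if D j then {Cut, Contraction} else {Interaction, Cocontraction})"
  proof (cases "D j")
    case True
    then have "E j \<in> upper_edges G (w j)" "E (Suc j) \<in> upper_edges G (w j)"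
      using assms(2) junction_edges by auto
    then show ?thesis using two_upper_edges_label[OF wf junction(1)] consecutive_distinct True by auto
  next
    case False
    then have "E j \<in> lower_edges G (w j)" "E (Suc j) \<in> lower_edges G (w j)"
      using assms(2) junction_edges by auto
    then show ?thesis using two_lower_edges_label[OF wf junction(1)] consecutive_distinct False by auto
  qed
  ultimately show ?thesis by (cases "D j") auto
qed

lemma has_turn:
  assumes "acyclic (vertex_rel G)"
  shows "\<exists>j. D j \<noteq> D (Suc j)"
proof (rule ccontr)
  assume "\<not> ?thesis"
  then have D: "D j = D 0" for j by (induction j) auto
  have "E n = E 0" "D n = D 0" using period(2,3)[of n] by simp_all
  then have closed: "w n = w 0" using junction(2)[of n] junction(2)[of 0] by simp
  show False
  proof (cases "D 0")
    case True
    then have "(w j, w (Suc j)) \<in> vertex_rel G" for j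
      using downward_edge[of j] D edge unfolding vertex_rel_def by blast
    then show False using periodic_chain_not_acyclic[OF _ closed period(1)] assms by blast
  next
    case False
    then have "(w j, w (Suc j)) \<in> (vertex_rel G)\<inverse>" for j
      using upward_edge[of j] D edge unfolding vertex_rel_def by blast
    moreover have "acyclic ((vertex_rel G)\<inverse>)" using assms by (simp add: acyclic_converse)
    ultimately show False using periodic_chain_not_acyclic[OF _ closed period(1)] by blast
  qed
qed

lemma periodic_edge: "E (j + n * m) = E j"
  using period(2) by (metis mod_mult_self1 mult.commute)

lemma positive_run:
  assumes pol: "polarity G \<pi>" and acy: "acyclic (vertex_rel G)"
  obtains a L where "\<not> \<pi> (E a)" "\<And>t. t \<le> L \<Longrightarrow> \<pi> (E (Suc a + t))" "\<not> \<pi> (E (Suc (Suc a + L)))"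
proof -
  obtain j0 where "\<pi> (E j0) \<noteq> \<pi> (E (Suc j0))"
    using has_turn[OF acy] turn_iff_flip[OF pol] by blast
  then obtain p q where pq: "\<pi> (E p)" "\<not> \<pi> (E q)" by metis
  define p' where "p' = p + n * Suc q"
  define r where "r = q + n * Suc p'"
  have "Suc q \<le> n * Suc q" "Suc p' \<le> n * Suc p'"
    using mult_le_mono1[of 1 n "Suc q"] mult_le_mono1[of 1 n "Suc p'"] period(1) by simp_all
  then have "q < p'" "p' < r" unfolding p'_def r_def by linarith+
  moreover have "\<pi> (E p')" "\<not> \<pi> (E r)" unfolding p'_def r_def periodic_edge using pq by simp_all
  ultimately obtain a b where run: "Suc a < b" "\<not> \<pi> (E a)" "\<not> \<pi> (E b)"
    "\<And>t. a < t \<Longrightarrow> t < b \<Longrightarrow> \<pi> (E t)"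
    using false_true_false_interval[of "\<lambda>j. \<pi> (E j)" q p' r] pq(2) by blast
  obtain L where b: "b = Suc (Suc a + L)" using run(1) less_iff_Suc_add by blast
  have "\<pi> (E (Suc a + t))" if "t \<le> L" for t using run(4) b that by simp
  then show ?thesis using that run(2,3) b by blast
qed

lemma positive_run_straight:
  assumes pol: "polarity G \<pi>" and run: "\<And>t. t \<le> L \<Longrightarrow> \<pi> (E (Suc a + t))" and "t \<le> L"
  shows "D (Suc a + t) = D (Suc a)"
  using assms(3)
proof (induction t)
  case (Suc t)
  then show ?case using turn_iff_flip[OF pol, of "Suc a + t"] run[of t] run[of "Suc t"] by auto
qed simp

lemma positive_run_ends:
  assumes pol: "polarity G \<pi>"
    and run: "\<not> \<pi> (E a)" "\<And>t. t \<le> L \<Longrightarrow> \<pi> (E (Suc a + t))" "\<not> \<pi> (E (Suc (Suc a + L)))"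
  shows "lab G (w a) = (if D (Suc a) then Interaction else Cut)"
    "lab G (w (Suc a + L)) = (if D (Suc a) then Cut else Interaction)"
  using turn_vertex_label[OF pol, of a] turn_iff_flip[OF pol, of a]
    turn_vertex_label[OF pol, of "Suc a + L"] turn_iff_flip[OF pol, of "Suc a + L"]
    positive_run_straight[OF pol run(2), of L] run(1,3) run(2)[of 0] run(2)[of L]
  by auto

text \<open>A maximal run of positive edges on the trail starts and ends with a turn, so it is a
  directed path from an interaction to a cut; without positive redexes it is a single edge.\<close>

lemma has_simple_edge:
  assumes pol: "polarity G \<pi>" and acy: "acyclic (vertex_rel G)"
    and irreducible: "\<not> positive_redex G \<pi>"
  shows "\<exists>j. simple_edge G (E j)"
proof -
  obtain a L where run: "\<not> \<pi> (E a)" "\<And>t. t \<le> L \<Longrightarrow> \<pi> (E (Suc a + t))"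
    "\<not> \<pi> (E (Suc (Suc a + L)))"
    using positive_run[OF pol acy] by blast
  define d where "d = D (Suc a)"
  have straight: "D (Suc a + t) = d" if "t \<le> L" for t
    using positive_run_straight[OF pol run(2) that] unfolding d_def .
  have start: "lab G (w a) = (if d then Interaction else Cut)"
    and stop: "lab G (w (Suc a + L)) = (if d then Cut else Interaction)"
    using positive_run_ends[OF pol run] unfolding d_def by auto
  have positive: "\<pi> (E (Suc a + t))" if "t \<le> L" for t using run(2) that .
  show ?thesis
  proof (cases d)
    case True
    have "L = 0"
    proof (rule positive_chain_single_edge[OF wf irreducible, where f = "\<lambda>t. E (Suc a + t)"])
      show "lo G (E (Suc a + t)) = up G (E (Suc a + Suc t))" if "t < L" for t
        using downward_edge[of "a + t"] downward_edge[of "Suc a + t"] straight[of t] straight[of "Suc t"]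
          that True by auto
    qed (use edge positive downward_edge[of a] downward_edge[of "a + L"] straight[of 0] straight[of L]
        True start stop junction(1) in auto)
    then show ?thesis
      using downward_edge[of a] straight[of 0] True start stop junction(1) edge
      unfolding simple_edge_def by auto
  next
    case False
    have reversed_positive: "\<pi> (E (Suc (a + L - t)))" if "t \<le> L" for t
      using positive[of "L - t"] that by simp
    have "L = 0"
    proof (rule positive_chain_single_edge[OF wf irreducible, where f = "\<lambda>t. E (Suc a + (L - t))"])
      show "lo G (E (Suc a + (L - t))) = up G (E (Suc a + (L - Suc t)))" if "t < L" for t
        using upward_edge[of "a + (L - t)"] upward_edge[of "a + (L - Suc t)"]
          straight[of "L - t"] straight[of "L - Suc t"] that False by (auto simp: Suc_diff_Suc)
    qed (use edge reversed_positive upward_edge[of a] upward_edge[of "a + L"] straight[of 0] straight[of L]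
        False start stop junction(1) in auto)
    then show ?thesis
      using upward_edge[of a] straight[of 0] False start stop junction(1) edge
      unfolding simple_edge_def by auto
  qed
qed

end

lemma closed_ai_walk_junction:
  assumes wf: "wf_flow G" and walk: "ai_walk G v xs ds v" and v: "v \<in> fV G"
  defines "n \<equiv> length xs"
  shows "\<exists>u\<in>fV G. tgt G (ds ! (j mod n)) (xs ! (j mod n)) = Nd u \<and>
    src G (ds ! (Suc j mod n)) (xs ! (Suc j mod n)) = Nd u \<and>
    (ds ! (j mod n) \<noteq> ds ! (Suc j mod n) \<longrightarrow> Suc j mod n \<noteq> 0 \<longrightarrow> lab G u \<in> {Interaction, Cut})"
proof -
  have n: "0 < n" using walk unfolding ai_walk_def n_def by auto
  show ?thesis
  proof (cases "Suc (j mod n) = n")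
    case True
    then have "j mod n = n - 1" "Suc j mod n = 0" by (auto simp: mod_Suc)
    then show ?thesis using walk v unfolding ai_walk_def n_def by auto
  next
    case False
    then have i: "Suc (j mod n) < n" "Suc j mod n = Suc (j mod n)"
      using n by (auto simp: mod_Suc le_neq_implies_less Suc_le_eq)
    then have edges: "xs ! (j mod n) \<in> fE G" "xs ! Suc (j mod n) \<in> fE G"
      using walk unfolding ai_walk_def n_def by (auto dest: nth_mem)
    have step: "tgt G (ds ! (j mod n)) (xs ! (j mod n)) = src G (ds ! Suc (j mod n)) (xs ! Suc (j mod n))"
      "ds ! (j mod n) \<noteq> ds ! Suc (j mod n) \<Longrightarrow>
         \<exists>u\<in>fV G. tgt G (ds ! (j mod n)) (xs ! (j mod n)) = Nd u \<and> lab G u \<in> {Interaction, Cut}"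
      using walk i unfolding ai_walk_def n_def by auto
    show ?thesis
    proof (cases "ds ! (j mod n) = ds ! Suc (j mod n)")
      case True
      then show ?thesis using straight_junction_vertex[OF wf edges] step(1) i by auto
    next
      case False
      then show ?thesis using step i by auto
    qed
  qed
qed

lemma closed_trail_of_aicycle:
  assumes wf: "wf_flow G" and acy: "acyclic (vertex_rel G)" and cycle: "aicycle G v xs"
  shows "\<exists>n E D w. closed_trail G n E D w \<and> (\<forall>j. E j \<in> set xs)"
proof -
  obtain ds where walk: "ai_walk G v xs ds v" and v: "v \<in> fV G" and dist: "distinct xs"
    using cycle aipath_ai_walk unfolding aicycle_def by blast
  define n where "n = length xs"
  define E where "E j = xs ! (j mod n)" for j
  define D where "D j = ds ! (j mod n)" for j
  have n: "0 < n" using walk unfolding ai_walk_def n_def by auto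
  have E: "E j \<in> set xs" "E j \<in> fE G" for j
    using walk n unfolding E_def n_def ai_walk_def by auto
  obtain w where w: "\<And>j. w j \<in> fV G \<and> tgt G (D j) (E j) = Nd (w j) \<and> src G (D (Suc j)) (E (Suc j)) = Nd (w j) \<and>
      (D j \<noteq> D (Suc j) \<longrightarrow> Suc j mod n \<noteq> 0 \<longrightarrow> lab G (w j) \<in> {Interaction, Cut})"
    using closed_ai_walk_junction[OF wf walk v] unfolding E_def D_def n_def by metis
  have "n \<noteq> 1"
  proof
    assume "n = 1"
    then have "E 1 = E 0" "D 1 = D 0" unfolding E_def D_def by auto
    then have "(w 0, w 0) \<in> vertex_rel G"
      using w[of 0] E(2)[of 0] unfolding vertex_rel_def src_def tgt_def by (cases "D 0") auto
    then show False using acy unfolding acyclic_def by blast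
  qed
  have "E j \<noteq> E (Suc j)" for j
  proof (cases "Suc (j mod n) = n")
    case True
    then have "Suc j mod n = 0" "j mod n \<noteq> 0" using \<open>n \<noteq> 1\<close> by (auto simp: mod_Suc)
    then show ?thesis using dist n unfolding E_def n_def by (simp add: nth_eq_iff_index_eq)
  next
    case False
    then have "Suc j mod n = Suc (j mod n)" "Suc (j mod n) < n"
      using n by (auto simp: mod_Suc le_neq_implies_less Suc_le_eq)
    then show ?thesis using dist n unfolding E_def n_def by (simp add: nth_eq_iff_index_eq)
  qed
  then have "closed_trail G n E D w"
    using wf n E(2) w unfolding closed_trail_def E_def D_def by auto
  then show ?thesis using E(1) by blast
qed

lemma aicycle_fragile:
  assumes "wf_flow G" "acyclic (vertex_rel G)" "polarity G \<pi>" "\<not> positive_redex G \<pi>"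
    and cycle: "aicycle G v xs"
  shows "fragile_cycle G v xs"
  using closed_trail_of_aicycle[OF assms(1,2) cycle] closed_trail.has_simple_edge[OF _ assms(3,2,4)]
    cycle unfolding fragile_cycle_def by blast

section \<open>Ranked polarised flows and their weight\<close>

definition ranked :: "flow \<Rightarrow> (nat \<Rightarrow> int) \<Rightarrow> bool" where
  "ranked G \<rho> \<longleftrightarrow> (\<forall>e\<in>fE G. \<forall>a b. up G e = Nd a \<longrightarrow> lo G e = Nd b \<longrightarrow> \<rho> a < \<rho> b)"

definition ranked_at :: "flow \<Rightarrow> (nat \<Rightarrow> int) \<Rightarrow> nat \<Rightarrow> bool" where
  "ranked_at G \<rho> v \<longleftrightarrow> (\<forall>e\<in>upper_edges G v. \<forall>a. up G e = Nd a \<longrightarrow> \<rho> a < \<rho> v) \<and>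
     (\<forall>e\<in>lower_edges G v. \<forall>b. lo G e = Nd b \<longrightarrow> \<rho> v < \<rho> b)"

definition positive_vertex :: "flow \<Rightarrow> (nat \<Rightarrow> bool) \<Rightarrow> nat \<Rightarrow> bool" where
  "positive_vertex G \<pi> v \<longleftrightarrow> (\<exists>e\<in>lower_edges G v. \<pi> e)"

text \<open>Only vertices carrying weight need bounded ranks; c2 ranks its new interactions one
  below the old one.\<close>

definition bounded_at :: "int \<Rightarrow> flow \<Rightarrow> (nat \<Rightarrow> bool) \<Rightarrow> (nat \<Rightarrow> int) \<Rightarrow> nat \<Rightarrow> bool" where
  "bounded_at R G \<pi> \<rho> v \<longleftrightarrow>
     (lab G v \<in> {Contraction, Cocontraction} \<and> positive_vertex G \<pi> v \<longrightarrow> 0 \<le> \<rho> v \<and> \<rho> v \<le> R)"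

definition flow_inv :: "int \<Rightarrow> flow \<Rightarrow> (nat \<Rightarrow> bool) \<Rightarrow> (nat \<Rightarrow> int) \<Rightarrow> bool" where
  "flow_inv R G \<pi> \<rho> \<longleftrightarrow> wf_flow G \<and> polarity G \<pi> \<and> ranked G \<rho> \<and> (\<forall>v\<in>fV G. bounded_at R G \<pi> \<rho> v)"

definition sound_at :: "int \<Rightarrow> flow \<Rightarrow> (nat \<Rightarrow> bool) \<Rightarrow> (nat \<Rightarrow> int) \<Rightarrow> nat \<Rightarrow> bool" where
  "sound_at R G \<pi> \<rho> v \<longleftrightarrow> arity_ok G v \<and> polar_at G \<pi> v \<and> bounded_at R G \<pi> \<rho> v \<and> ranked_at G \<rho> v"

text \<open>The base 3 makes the weight drop under c3, which duplicates a positive contraction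
  and a positive cocontraction while moving each of them past the other.\<close>

definition weight :: "int \<Rightarrow> flow \<Rightarrow> (nat \<Rightarrow> bool) \<Rightarrow> (nat \<Rightarrow> int) \<Rightarrow> nat \<Rightarrow> nat" where
  "weight R G \<pi> \<rho> v =
     (if positive_vertex G \<pi> v then
        (case lab G v of Contraction \<Rightarrow> 3 ^ nat (R - \<rho> v) | Cocontraction \<Rightarrow> 3 ^ nat (\<rho> v) | _ \<Rightarrow> 0)
      else 0)"

definition total_weight :: "int \<Rightarrow> flow \<Rightarrow> (nat \<Rightarrow> bool) \<Rightarrow> (nat \<Rightarrow> int) \<Rightarrow> nat" where
  "total_weight R G \<pi> \<rho> = (\<Sum>v\<in>fV G. weight R G \<pi> \<rho> v)"

lemma ranked_acyclic:
  assumes "ranked G \<rho>"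
  shows "acyclic (vertex_rel G)"
proof -
  have "(a, b) \<in> (vertex_rel G)\<^sup>+ \<Longrightarrow> \<rho> a < \<rho> b" for a b
  proof (induction rule: trancl_induct)
    case (step b c)
    then have "\<rho> b < \<rho> c" using assms unfolding vertex_rel_def ranked_def by auto
    then show ?case using step.IH by simp
  qed (use assms in \<open>auto simp: vertex_rel_def ranked_def\<close>)
  then show ?thesis unfolding acyclic_def by (meson less_irrefl)
qed

lemma acyclic_ranked:
  assumes wf: "wf_flow G" and acy: "acyclic (vertex_rel G)"
  shows "ranked G (\<lambda>x. int (card {y. (y, x) \<in> (vertex_rel G)\<^sup>+}))"
  unfolding ranked_def
proof (intro ballI allI impI)
  fix e a b assume e: "e \<in> fE G" "up G e = Nd a" "lo G e = Nd b"
  let ?anc = "\<lambda>x. {y. (y, x) \<in> (vertex_rel G)\<^sup>+}"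
  have "vertex_rel G \<subseteq> fV G \<times> fV G"
    using wf_up_vertex[OF wf] wf_lo_vertex[OF wf] unfolding vertex_rel_def by blast
  then have "?anc b \<subseteq> fV G" using trancl_subset_Sigma by blast
  then have fin: "finite (?anc b)" using wf finite_subset unfolding wf_flow_def by blast
  have ab: "(a, b) \<in> vertex_rel G" using e unfolding vertex_rel_def by blast
  then have "?anc a \<subseteq> ?anc b" by (auto intro: trancl_into_trancl)
  moreover have "a \<in> ?anc b - ?anc a" using ab acy unfolding acyclic_def by auto
  ultimately have "?anc a \<subset> ?anc b" by blast
  then show "int (card (?anc a)) < int (card (?anc b))" using fin psubset_card_mono by auto
qed

lemma flow_inv_wf: "flow_inv R G \<pi> \<rho> \<Longrightarrow> wf_flow G"
  and flow_inv_polarity: "flow_inv R G \<pi> \<rho> \<Longrightarrow> polarity G \<pi>"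
  and flow_inv_acyclic: "flow_inv R G \<pi> \<rho> \<Longrightarrow> acyclic (vertex_rel G)"
  unfolding flow_inv_def using ranked_acyclic by auto

lemma flow_inv_atomic_flow: "flow_inv R G \<pi> \<rho> \<Longrightarrow> atomic_flow G"
  using flow_inv_wf flow_inv_polarity flow_inv_acyclic atomic_flow_iff by blast

lemma atomic_flow_inv:
  assumes "atomic_flow G"
  shows "\<exists>R \<pi> \<rho>. flow_inv R G \<pi> \<rho>"
proof -
  obtain \<pi> where wf: "wf_flow G" and acy: "acyclic (vertex_rel G)" and pol: "polarity G \<pi>"
    using assms atomic_flow_iff by blast
  define \<rho> where "\<rho> x = int (card {y. (y, x) \<in> (vertex_rel G)\<^sup>+})" for x
  define R where "R = Max (\<rho> ` fV G)"
  have "finite (fV G)" using wf unfolding wf_flow_def by blast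
  then have "bounded_at R G \<pi> \<rho> v" if "v \<in> fV G" for v
    using that unfolding bounded_at_def R_def \<rho>_def by simp
  then have "flow_inv R G \<pi> \<rho>"
    using wf pol acyclic_ranked[OF wf acy] unfolding flow_inv_def \<rho>_def by blast
  then show ?thesis by blast
qed

lemma vertex_view_cong:
  assumes "lab B v = lab A v" "upper_edges B v = upper_edges A v" "lower_edges B v = lower_edges A v"
    and "\<forall>e\<in>upper_edges A v \<union> lower_edges A v. \<pi>' e = \<pi> e" "\<rho>' v = \<rho> v"
  shows "polar_at B \<pi>' v = polar_at A \<pi> v"
    "positive_vertex B \<pi>' v = positive_vertex A \<pi> v"
    "bounded_at R B \<pi>' \<rho>' v = bounded_at R A \<pi> \<rho> v" "weight R B \<pi>' \<rho>' v = weight R A \<pi> \<rho> v"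
proof -
  show "polar_at B \<pi>' v = polar_at A \<pi> v"
    using assms(4) unfolding polar_at_def assms(1-3) by auto
  show pos: "positive_vertex B \<pi>' v = positive_vertex A \<pi> v"
    using assms(3,4) unfolding positive_vertex_def by auto
  show "bounded_at R B \<pi>' \<rho>' v = bounded_at R A \<pi> \<rho> v"
    unfolding bounded_at_def assms(1,5) pos ..
  show "weight R B \<pi>' \<rho>' v = weight R A \<pi> \<rho> v"
    unfolding weight_def assms(1,5) pos ..
qed

section \<open>Local replacement of vertices\<close>

lemma Nd_in_image_iff [simp]: "Nd a \<in> Nd ` S \<longleftrightarrow> a \<in> S"
  by auto

definition relinked :: "nat set \<Rightarrow> nat set \<Rightarrow> node \<Rightarrow> node \<Rightarrow> bool" where
  "relinked X N a b \<longleftrightarrow> (if a \<in> Nd ` X then b \<in> Nd ` N else b = a)"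

definition replaces :: "flow \<Rightarrow> nat set \<Rightarrow> flow \<Rightarrow> nat set \<Rightarrow> bool" where
  "replaces A X B N \<longleftrightarrow> X \<subseteq> fV A \<and> N \<inter> fV A = {} \<and> finite N \<and> finite (fE B) \<and>
     fV B = (fV A - X) \<union> N \<and> (\<forall>v\<in>fV A - X. lab B v = lab A v) \<and>
     (\<forall>e\<in>fE A - fE B. up A e \<in> Nd ` X \<and> lo A e \<in> Nd ` X) \<and>
     (\<forall>e\<in>fE B - fE A. up B e \<in> Nd ` N \<and> lo B e \<in> Nd ` N) \<and>
     (\<forall>e\<in>fE A \<inter> fE B. relinked X N (up A e) (up B e) \<and> relinked X N (lo A e) (lo B e))"

context
  fixes A X B N
  assumes rep: "replaces A X B N"
begin

lemma replaces_vertices: "fV B = (fV A - X) \<union> N" "X \<subseteq> fV A" "N \<inter> fV A = {}"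
  using rep unfolding replaces_def by auto

lemma replaces_endpoint:
  assumes "e \<in> fE B"
  shows "(e \<in> fE A \<and> up A e \<notin> Nd ` X \<and> up B e = up A e) \<or> up B e \<in> Nd ` N"
    "(e \<in> fE A \<and> lo A e \<notin> Nd ` X \<and> lo B e = lo A e) \<or> lo B e \<in> Nd ` N"
proof -
  have "relinked X N (up A e) (up B e) \<and> relinked X N (lo A e) (lo B e)" if "e \<in> fE A"
    using rep assms that unfolding replaces_def by blast
  moreover have "up B e \<in> Nd ` N \<and> lo B e \<in> Nd ` N" if "e \<notin> fE A"
    using rep assms that unfolding replaces_def by blast
  ultimately show "(e \<in> fE A \<and> up A e \<notin> Nd ` X \<and> up B e = up A e) \<or> up B e \<in> Nd ` N"
    "(e \<in> fE A \<and> lo A e \<notin> Nd ` X \<and> lo B e = lo A e) \<or> lo B e \<in> Nd ` N"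
    unfolding relinked_def by (cases "e \<in> fE A"; auto split: if_splits)+
qed

lemma replaces_kept_endpoint:
  assumes "e \<in> fE A"
  shows "up A e \<notin> Nd ` X \<Longrightarrow> e \<in> fE B \<and> up B e = up A e"
    "lo A e \<notin> Nd ` X \<Longrightarrow> e \<in> fE B \<and> lo B e = lo A e"
proof -
  have "e \<in> fE B" if "up A e \<notin> Nd ` X \<or> lo A e \<notin> Nd ` X"
    using rep assms that unfolding replaces_def by blast
  moreover have "relinked X N (up A e) (up B e) \<and> relinked X N (lo A e) (lo B e)" if "e \<in> fE B"
    using rep assms that unfolding replaces_def by blast
  ultimately show "up A e \<notin> Nd ` X \<Longrightarrow> e \<in> fE B \<and> up B e = up A e"
    "lo A e \<notin> Nd ` X \<Longrightarrow> e \<in> fE B \<and> lo B e = lo A e"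
    unfolding relinked_def by auto
qed

lemma replaces_untouched_edge:
  assumes "e \<in> fE B" "up B e = Nd a" "lo B e = Nd b" "a \<notin> N" "b \<notin> N"
  shows "e \<in> fE A \<and> up A e = Nd a \<and> lo A e = Nd b"
  using replaces_endpoint[OF assms(1)] assms(2-5) by auto

lemma replaces_old_vertex:
  assumes v: "v \<in> fV A - X"
  shows "lab B v = lab A v" "upper_edges B v = upper_edges A v" "lower_edges B v = lower_edges A v"
proof -
  show "lab B v = lab A v" using rep v unfolding replaces_def by blast
  have "v \<notin> N" "v \<notin> X" using v replaces_vertices by auto
  have "e \<in> fE B \<and> up B e = Nd v \<longleftrightarrow> e \<in> fE A \<and> up A e = Nd v"
    "e \<in> fE B \<and> lo B e = Nd v \<longleftrightarrow> e \<in> fE A \<and> lo A e = Nd v" for e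
    using replaces_endpoint[of e] replaces_kept_endpoint[of e] \<open>v \<notin> N\<close> \<open>v \<notin> X\<close> by auto
  then show "upper_edges B v = upper_edges A v" "lower_edges B v = lower_edges A v"
    unfolding upper_edges_def lower_edges_def by blast+
qed

lemma replaces_wf:
  assumes wf: "wf_flow A" and new: "\<forall>v\<in>N. arity_ok B v"
  shows "wf_flow B"
proof -
  have "up B e \<in> insert Top (Nd ` fV B) \<and> lo B e \<in> insert Bot (Nd ` fV B)" if e: "e \<in> fE B" for e
  proof -
    have "up A e \<in> insert Top (Nd ` fV A) \<and> lo A e \<in> insert Bot (Nd ` fV A)" if "e \<in> fE A"
      using wf that unfolding wf_flow_def by blast
    then show ?thesis using replaces_endpoint[OF e] replaces_vertices(1) by auto
  qed
  moreover have "arity_ok B v" if "v \<in> fV B" for v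
  proof (cases "v \<in> N")
    case False
    then have "v \<in> fV A - X" using that replaces_vertices(1) by auto
    then show ?thesis using wf_arity[OF wf] replaces_old_vertex unfolding arity_ok_def by simp
  qed (use new in blast)
  moreover have "finite (fV B)" "finite (fE B)"
    using rep wf unfolding replaces_def wf_flow_def by auto
  ultimately show ?thesis unfolding wf_flow_def by blast
qed

lemma replaces_ranked:
  assumes wf: "wf_flow A" and rk: "ranked A \<rho>" and same: "\<forall>v\<in>fV A. \<rho>' v = \<rho> v"
    and new: "\<forall>v\<in>N. ranked_at B \<rho>' v"
  shows "ranked B \<rho>'"
  unfolding ranked_def
proof (intro ballI allI impI)
  fix e a b assume e: "e \<in> fE B" "up B e = Nd a" "lo B e = Nd b"
  show "\<rho>' a < \<rho>' b"
  proof (cases "a \<in> N \<or> b \<in> N")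
    case True
    then show ?thesis using new e lower_edgesI[of e B a] upper_edgesI[of e B b]
      unfolding ranked_at_def by blast
  next
    case False
    then have "e \<in> fE A" "up A e = Nd a" "lo A e = Nd b" using replaces_untouched_edge e by auto
    then show ?thesis using rk same wf_up_vertex[OF wf] wf_lo_vertex[OF wf]
      unfolding ranked_def by metis
  qed
qed

lemma replaces_old_vertex_view:
  assumes v: "v \<in> fV A - X" and "\<forall>e\<in>fE A. \<pi>' e = \<pi> e" "\<forall>v\<in>fV A. \<rho>' v = \<rho> v"
  shows "polar_at B \<pi>' v = polar_at A \<pi> v" "bounded_at R B \<pi>' \<rho>' v = bounded_at R A \<pi> \<rho> v"
    "weight R B \<pi>' \<rho>' v = weight R A \<pi> \<rho> v"
proof -
  have \<pi>_eq: "\<forall>e\<in>upper_edges A v \<union> lower_edges A v. \<pi>' e = \<pi> e"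
    using assms(2) incident_edges_subset by blast
  have \<rho>_eq: "\<rho>' v = \<rho> v" using v assms(3) by blast
  show "polar_at B \<pi>' v = polar_at A \<pi> v" "bounded_at R B \<pi>' \<rho>' v = bounded_at R A \<pi> \<rho> v"
    "weight R B \<pi>' \<rho>' v = weight R A \<pi> \<rho> v"
    using vertex_view_cong(1,3,4)[where A = A and B = B and v = v and \<pi> = \<pi> and \<pi>' = \<pi>' and
        \<rho> = \<rho> and \<rho>' = \<rho>', OF replaces_old_vertex(1-3)[OF v] \<pi>_eq \<rho>_eq]
    by simp_all
qed

lemma replaces_flow_inv:
  assumes inv: "flow_inv R A \<pi> \<rho>" and same: "\<forall>e\<in>fE A. \<pi>' e = \<pi> e" "\<forall>v\<in>fV A. \<rho>' v = \<rho> v"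
    and new: "\<forall>v\<in>N. sound_at R B \<pi>' \<rho>' v"
  shows "flow_inv R B \<pi>' \<rho>'"
proof -
  have wf: "wf_flow A" and rk: "ranked A \<rho>" using inv unfolding flow_inv_def by blast+
  have new_arity: "\<forall>v\<in>N. arity_ok B v" and new_ranked: "\<forall>v\<in>N. ranked_at B \<rho>' v"
    using new unfolding sound_at_def by blast+
  have "polar_at B \<pi>' v \<and> bounded_at R B \<pi>' \<rho>' v" if "v \<in> fV B" for v
  proof (cases "v \<in> N")
    case True
    then show ?thesis using new unfolding sound_at_def by blast
  next
    case False
    then have v: "v \<in> fV A - X" using that replaces_vertices(1) by auto
    have "polar_at A \<pi> v \<and> bounded_at R A \<pi> \<rho> v" using inv v unfolding flow_inv_def polarity_def by blast
    then show ?thesis using replaces_old_vertex_view[OF v same] by blast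
  qed
  then show ?thesis
    using replaces_wf[OF wf new_arity] replaces_ranked[OF wf rk same(2) new_ranked]
    unfolding flow_inv_def polarity_def by blast
qed

lemma replaces_total_weight:
  assumes fin: "finite (fV A)" and same: "\<forall>e\<in>fE A. \<pi>' e = \<pi> e" "\<forall>v\<in>fV A. \<rho>' v = \<rho> v"
  shows "total_weight R B \<pi>' \<rho>' + (\<Sum>v\<in>X. weight R A \<pi> \<rho> v) =
    total_weight R A \<pi> \<rho> + (\<Sum>v\<in>N. weight R B \<pi>' \<rho>' v)"
proof -
  have fin_N: "finite N" using rep unfolding replaces_def by blast
  have "total_weight R B \<pi>' \<rho>' = (\<Sum>v\<in>fV A - X. weight R B \<pi>' \<rho>' v) + (\<Sum>v\<in>N. weight R B \<pi>' \<rho>' v)"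
    unfolding total_weight_def replaces_vertices(1)
    using fin fin_N replaces_vertices(3) by (intro sum.union_disjoint) auto
  also have "(\<Sum>v\<in>fV A - X. weight R B \<pi>' \<rho>' v) = (\<Sum>v\<in>fV A - X. weight R A \<pi> \<rho> v)"
    using replaces_old_vertex_view(3)[OF _ same] by simp
  finally have B: "total_weight R B \<pi>' \<rho>' =
    (\<Sum>v\<in>fV A - X. weight R A \<pi> \<rho> v) + (\<Sum>v\<in>N. weight R B \<pi>' \<rho>' v)" .
  have A: "total_weight R A \<pi> \<rho> = (\<Sum>v\<in>fV A - X. weight R A \<pi> \<rho> v) + (\<Sum>v\<in>X. weight R A \<pi> \<rho> v)"
    unfolding total_weight_def by (rule sum.subset_diff[OF replaces_vertices(2) fin])
  from A B show ?thesis by linarith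
qed

end

section \<open>Reducing positive redexes\<close>

lemma card_1_mem_eq: "card S = 1 \<Longrightarrow> x \<in> S \<Longrightarrow> S = {x}"
  by (metis card_1_singletonE singletonD)

lemma card_2_mem_eq: "card S = 2 \<Longrightarrow> x \<in> S \<Longrightarrow> \<exists>y. y \<noteq> x \<and> S = {x, y}"
  by (metis card_2_iff insert_commute insertE singletonD)

lemma fresh_injection:
  assumes "finite (S :: nat set)"
  shows "\<exists>f :: nat \<Rightarrow> nat. inj f \<and> (\<forall>i. f i \<notin> S)"
proof -
  define f where "f i = Suc (Max (insert 0 S)) + i" for i
  have "f i \<notin> S" for i
    using assms Max_ge[of "insert 0 S"] unfolding f_def
    by (metis finite_insert insertI2 not_add_less1 le_imp_less_Suc)
  moreover have "inj f" unfolding f_def by (simp add: inj_def)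
  ultimately show ?thesis by blast
qed

lemma fresh_not_incident:
  "wf_flow A \<Longrightarrow> e \<in> fE A \<Longrightarrow> u \<notin> fV A \<Longrightarrow> up A e \<noteq> Nd u \<and> lo A e \<noteq> Nd u"
  using wf_up_vertex wf_lo_vertex by blast

locale c1_redex =
  fixes R :: int and A :: flow and \<pi> :: "nat \<Rightarrow> bool" and \<rho> :: "nat \<Rightarrow> int"
    and g k e e1 e2 e3 k' x1 x2 d1 d2 :: nat
  assumes inv: "flow_inv R A \<pi> \<rho>"
    and contraction: "g \<in> fV A" "lab A g = Contraction" "upper_edges A g = {e1, e2}" "e1 \<noteq> e2"
      "lower_edges A g = {e}"
    and cut: "k \<in> fV A" "lab A k = Cut" "upper_edges A k = {e, e3}" "e3 \<noteq> e"
    and positive: "\<pi> e"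
    and fresh: "k' \<notin> fV A" "x1 \<notin> fV A" "x2 \<notin> fV A" "distinct [k', x1, x2]"
      "d1 \<notin> fE A" "d2 \<notin> fE A" "d1 \<noteq> d2"
begin

definition result :: flow where
  "result = A\<lparr>fV := (fV A - {g, k}) \<union> {k', x1, x2},
     fE := (fE A - {e}) \<union> {d1, d2},
     lab := (lab A)(k' := Cocontraction, x1 := Cut, x2 := Cut),
     up := (up A)(d1 := Nd k', d2 := Nd k'),
     lo := (lo A)(e3 := Nd k', e1 := Nd x1, d1 := Nd x1, e2 := Nd x2, d2 := Nd x2)\<rparr>"

definition result_polarity :: "nat \<Rightarrow> bool" where
  "result_polarity = \<pi>(d1 := \<pi> e3, d2 := \<pi> e3)"

definition result_rank :: "nat \<Rightarrow> int" where
  "result_rank = \<rho>(k' := \<rho> k, x1 := \<rho> k + 1, x2 := \<rho> k + 1)"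

lemma wf: "wf_flow A"
  using inv by (rule flow_inv_wf)

lemma no_lower_at_cut: "lower_edges A k = {}"
  using wf_arity[OF wf cut(1)] cut(2) finite_lower_edges[OF wf] unfolding arity_ok_def by simp

lemma incidence:
  assumes "y \<in> fE A"
  shows "up A y = Nd g \<longleftrightarrow> y = e" "up A y \<noteq> Nd k"
    "lo A y = Nd g \<longleftrightarrow> y = e1 \<or> y = e2" "lo A y = Nd k \<longleftrightarrow> y = e \<or> y = e3"
  using assms contraction(3,5) cut(3) no_lower_at_cut
  unfolding upper_edges_def lower_edges_def by blast+

lemma redex_edges:
  "e \<in> fE A" "e1 \<in> fE A" "e2 \<in> fE A" "e3 \<in> fE A"
  "up A e = Nd g" "lo A e = Nd k" "lo A e1 = Nd g" "lo A e2 = Nd g" "lo A e3 = Nd k"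
  using contraction(3,5) cut(3) unfolding upper_edges_def lower_edges_def by blast+

lemma distinct_edges:
  "g \<noteq> k" "e \<noteq> e1" "e \<noteq> e2" "e3 \<noteq> e1" "e3 \<noteq> e2"
  "d1 \<noteq> e" "d1 \<noteq> e1" "d1 \<noteq> e2" "d1 \<noteq> e3" "d2 \<noteq> e" "d2 \<noteq> e1" "d2 \<noteq> e2" "d2 \<noteq> e3"
  using contraction(2) cut(2) redex_edges fresh(5,6) by auto

lemma c_step_result: "c_step A result"
  unfolding c_step_def c1_step_def result_def
  using contraction cut redex_edges distinct_edges fresh by blast

lemma result_fields:
  "fV result = (fV A - {g, k}) \<union> {k', x1, x2}" "fE result = (fE A - {e}) \<union> {d1, d2}"
  "lab result = (lab A)(k' := Cocontraction, x1 := Cut, x2 := Cut)"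
  "up result = (up A)(d1 := Nd k', d2 := Nd k')"
  "lo result = (lo A)(e3 := Nd k', e1 := Nd x1, d1 := Nd x1, e2 := Nd x2, d2 := Nd x2)"
  unfolding result_def by simp_all

lemma replaces_result: "replaces A {g, k} result {k', x1, x2}"
proof -
  have "relinked {g, k} {k', x1, x2} (up A y) (up result y) \<and>
      relinked {g, k} {k', x1, x2} (lo A y) (lo result y)" if y: "y \<in> fE A" "y \<noteq> e" for y
  proof -
    have "y \<noteq> d1" "y \<noteq> d2" using y fresh by auto
    then have "relinked {g, k} {k', x1, x2} (up A y) (up result y)"
      using incidence[OF y(1)] y(2) unfolding relinked_def result_fields by auto
    moreover have "relinked {g, k} {k', x1, x2} (lo A y) (lo result y)"
      using incidence[OF y(1)] y(2) \<open>y \<noteq> d1\<close> \<open>y \<noteq> d2\<close> distinct_edges redex_edges contraction(4)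
      unfolding relinked_def result_fields by auto
    ultimately show ?thesis ..
  qed
  moreover have "finite (fE A)" using wf unfolding wf_flow_def by blast
  ultimately show ?thesis
    unfolding replaces_def result_fields
    using contraction(1,2) cut(1,2) redex_edges fresh distinct_edges by auto
qed

lemma result_incidence:
  "upper_edges result k' = {e3}" "lower_edges result k' = {d1, d2}"
  "upper_edges result x1 = {e1, d1}" "lower_edges result x1 = {}"
  "upper_edges result x2 = {e2, d2}" "lower_edges result x2 = {}"
  using fresh_not_incident[OF wf _ fresh(1)] fresh_not_incident[OF wf _ fresh(2)]
    fresh_not_incident[OF wf _ fresh(3)] fresh distinct_edges redex_edges contraction(4) cut(4)
  unfolding upper_edges_def lower_edges_def result_fields by auto

lemma redex_polarity: "\<pi> e1 = \<pi> e" "\<pi> e2 = \<pi> e" "\<pi> e3 \<noteq> \<pi> e"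
proof -
  have "polar_at A \<pi> g" "polar_at A \<pi> k"
    using inv contraction(1) cut(1) unfolding flow_inv_def polarity_def by blast+
  then show "\<pi> e1 = \<pi> e" "\<pi> e2 = \<pi> e" "\<pi> e3 \<noteq> \<pi> e"
    using polar_at_same[of A \<pi> g] polar_at_differ[of A \<pi> k] contraction cut by auto
qed

lemma redex_ranks: "\<rho> g < \<rho> k"
  "\<And>y a. y \<in> fE A \<Longrightarrow> up A y = Nd a \<Longrightarrow> lo A y = Nd g \<Longrightarrow> \<rho> a < \<rho> g"
  "\<And>y a. y \<in> fE A \<Longrightarrow> up A y = Nd a \<Longrightarrow> lo A y = Nd k \<Longrightarrow> \<rho> a < \<rho> k"
  using inv redex_edges unfolding flow_inv_def ranked_def by blast+

lemma result_agrees: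
  "\<forall>y\<in>fE A. result_polarity y = \<pi> y" "\<forall>v\<in>fV A. result_rank v = \<rho> v"
  unfolding result_polarity_def result_rank_def using fresh by auto

lemma new_vertices_sound: "\<forall>v\<in>{k', x1, x2}. sound_at R result result_polarity result_rank v"
proof -
  have labels: "lab result k' = Cocontraction" "lab result x1 = Cut" "lab result x2 = Cut"
    using fresh(4) unfolding result_fields by auto
  have polarities: "result_polarity e1" "result_polarity e2" "\<not> result_polarity e3"
    "\<not> result_polarity d1" "\<not> result_polarity d2"
    using redex_polarity positive distinct_edges fresh(7) unfolding result_polarity_def by auto
  have ranks: "result_rank k' = \<rho> k" "result_rank x1 = \<rho> k + 1" "result_rank x2 = \<rho> k + 1"
    using fresh(4) unfolding result_rank_def by auto
  have new_ends: "up result d1 = Nd k'" "up result d2 = Nd k'" "lo result d1 = Nd x1"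
    "lo result d2 = Nd x2"
    using fresh(4,7) distinct_edges unfolding result_fields by auto
  have above: "result_rank a < \<rho> k" if "y \<in> {e1, e2, e3}" "up result y = Nd a" for y a
  proof -
    have "up A y = Nd a" using that distinct_edges unfolding result_fields by auto
    moreover have "a \<in> fV A" using calculation that redex_edges wf_up_vertex[OF wf] by blast
    ultimately show ?thesis
      using that redex_edges redex_ranks result_agrees(2) by fastforce
  qed
  have "sound_at R result result_polarity result_rank k'"
    using labels polarities ranks new_ends above[of e3] result_incidence(1,2) fresh(7) distinct_edges
    unfolding sound_at_def arity_ok_def polar_at_def bounded_at_def ranked_at_def positive_vertex_def
    by auto
  moreover have "sound_at R result result_polarity result_rank x1"
    using labels polarities ranks new_ends above[of e1] result_incidence(3,4) distinct_edges fresh(4)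
    unfolding sound_at_def arity_ok_def polar_at_def bounded_at_def ranked_at_def
    by auto
  moreover have "sound_at R result result_polarity result_rank x2"
    using labels polarities ranks new_ends above[of e2] result_incidence(5,6) distinct_edges fresh(4)
    unfolding sound_at_def arity_ok_def polar_at_def bounded_at_def ranked_at_def
    by auto
  ultimately show ?thesis by blast
qed

lemma new_vertices_weightless: "(\<Sum>v\<in>{k', x1, x2}. weight R result result_polarity result_rank v) = 0"
proof -
  have "\<not> positive_vertex result result_polarity k'"
    using result_incidence(2) redex_polarity(3) positive distinct_edges fresh(7)
    unfolding positive_vertex_def result_polarity_def by auto
  moreover have "lab result x1 = Cut" "lab result x2 = Cut"
    using fresh(4) unfolding result_fields by auto
  ultimately show ?thesis using fresh(4) unfolding weight_def by simp
qed

lemma positive_contraction_weight: "0 < weight R A \<pi> \<rho> g"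
  using contraction(2,5) positive unfolding weight_def positive_vertex_def by simp

lemma reduces:
  "c_step A result \<and> flow_inv R result result_polarity result_rank \<and>
   total_weight R result result_polarity result_rank < total_weight R A \<pi> \<rho>"
proof -
  have "finite (fV A)" using wf unfolding wf_flow_def by blast
  then have "total_weight R result result_polarity result_rank + (\<Sum>v\<in>{g, k}. weight R A \<pi> \<rho> v) =
      total_weight R A \<pi> \<rho>"
    using replaces_total_weight[OF replaces_result _ result_agrees] new_vertices_weightless by simp
  moreover have "0 < (\<Sum>v\<in>{g, k}. weight R A \<pi> \<rho> v)"
    using positive_contraction_weight distinct_edges(1) by simp
  ultimately show ?thesis
    using c_step_result replaces_flow_inv[OF replaces_result inv result_agrees new_vertices_sound] by linarith
qed

end

lemma c1_reduction:
  assumes inv: "flow_inv R A \<pi> \<rho>" and e: "e \<in> fE A" "\<pi> e" "up A e = Nd g" "lo A e = Nd k"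
    and g: "g \<in> fV A" "lab A g = Contraction" and k: "k \<in> fV A" "lab A k = Cut"
  shows "\<exists>B \<pi>' \<rho>'. c_step A B \<and> flow_inv R B \<pi>' \<rho>' \<and> total_weight R B \<pi>' \<rho>' < total_weight R A \<pi> \<rho>"
proof -
  have wf: "wf_flow A" using inv by (rule flow_inv_wf)
  obtain e1 e2 where e12: "e1 \<noteq> e2" "upper_edges A g = {e1, e2}"
    using wf_arity[OF wf g(1)] g(2) card_2_iff unfolding arity_ok_def by (metis n_upper.simps(5))
  have "lower_edges A g = {e}"
    using card_1_mem_eq[OF _ lower_edgesI[OF e(1,3)]] wf_arity[OF wf g(1)] g(2)
    unfolding arity_ok_def by simp
  moreover obtain e3 where "e3 \<noteq> e" "upper_edges A k = {e, e3}"
    using wf_arity[OF wf k(1)] k(2) card_2_mem_eq upper_edgesI[OF e(1,4)] unfolding arity_ok_def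
    by (metis n_upper.simps(2))
  moreover obtain f h :: "nat \<Rightarrow> nat" where "inj f" "\<forall>i. f i \<notin> fV A" "inj h" "\<forall>i. h i \<notin> fE A"
    using fresh_injection wf unfolding wf_flow_def by metis
  ultimately interpret c1_redex R A \<pi> \<rho> g k e e1 e2 e3 "f 0" "f 1" "f 2" "h 0" "h 1"
    using inv g k e12 e(2) by unfold_locales (auto simp: inj_eq)
  show ?thesis using reduces by blast
qed

locale c2_redex =
  fixes R :: int and A :: flow and \<pi> :: "nat \<Rightarrow> bool" and \<rho> :: "nat \<Rightarrow> int"
    and i k e1 e2 e3 e4 g' i1 i2 d1 d2 :: nat
  assumes inv: "flow_inv R A \<pi> \<rho>"
    and interaction: "i \<in> fV A" "lab A i = Interaction" "lower_edges A i = {e4, e3}" "e3 \<noteq> e4"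
    and cocontraction: "k \<in> fV A" "lab A k = Cocontraction" "upper_edges A k = {e4}"
      "lower_edges A k = {e1, e2}" "e1 \<noteq> e2"
    and positive: "\<pi> e4"
    and fresh: "g' \<notin> fV A" "i1 \<notin> fV A" "i2 \<notin> fV A" "distinct [g', i1, i2]"
      "d1 \<notin> fE A" "d2 \<notin> fE A" "d1 \<noteq> d2"
begin

definition result :: flow where
  "result = A\<lparr>fV := (fV A - {i, k}) \<union> {g', i1, i2},
     fE := (fE A - {e4}) \<union> {d1, d2},
     lab := (lab A)(g' := Contraction, i1 := Interaction, i2 := Interaction),
     up := (up A)(e3 := Nd g', e1 := Nd i1, d1 := Nd i1, e2 := Nd i2, d2 := Nd i2),
     lo := (lo A)(d1 := Nd g', d2 := Nd g')\<rparr>"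

definition result_polarity :: "nat \<Rightarrow> bool" where
  "result_polarity = \<pi>(d1 := \<pi> e3, d2 := \<pi> e3)"

definition result_rank :: "nat \<Rightarrow> int" where
  "result_rank = \<rho>(g' := \<rho> i, i1 := \<rho> i - 1, i2 := \<rho> i - 1)"

lemma wf: "wf_flow A"
  using inv by (rule flow_inv_wf)

lemma no_upper_at_interaction: "upper_edges A i = {}"
  using wf_arity[OF wf interaction(1)] interaction(2) finite_upper_edges[OF wf]
  unfolding arity_ok_def by simp

lemma incidence:
  assumes "y \<in> fE A"
  shows "up A y = Nd i \<longleftrightarrow> y = e4 \<or> y = e3" "up A y = Nd k \<longleftrightarrow> y = e1 \<or> y = e2"
    "lo A y \<noteq> Nd i" "lo A y = Nd k \<longleftrightarrow> y = e4"
  using assms interaction(3) cocontraction(3,4) no_upper_at_interaction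
  unfolding upper_edges_def lower_edges_def by blast+

lemma redex_edges:
  "e1 \<in> fE A" "e2 \<in> fE A" "e3 \<in> fE A" "e4 \<in> fE A"
  "up A e4 = Nd i" "lo A e4 = Nd k" "up A e3 = Nd i" "up A e1 = Nd k" "up A e2 = Nd k"
  using interaction(3) cocontraction(3,4) unfolding upper_edges_def lower_edges_def by blast+

lemma distinct_edges:
  "i \<noteq> k" "e4 \<noteq> e1" "e4 \<noteq> e2" "e3 \<noteq> e1" "e3 \<noteq> e2"
  "d1 \<noteq> e1" "d1 \<noteq> e2" "d1 \<noteq> e3" "d1 \<noteq> e4" "d2 \<noteq> e1" "d2 \<noteq> e2" "d2 \<noteq> e3" "d2 \<noteq> e4"
  using interaction(2) cocontraction(2) redex_edges fresh(5,6) by auto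

lemma c_step_result: "c_step A result"
  unfolding c_step_def c2_step_def result_def
  using interaction cocontraction redex_edges distinct_edges fresh by blast

lemma result_fields:
  "fV result = (fV A - {i, k}) \<union> {g', i1, i2}" "fE result = (fE A - {e4}) \<union> {d1, d2}"
  "lab result = (lab A)(g' := Contraction, i1 := Interaction, i2 := Interaction)"
  "up result = (up A)(e3 := Nd g', e1 := Nd i1, d1 := Nd i1, e2 := Nd i2, d2 := Nd i2)"
  "lo result = (lo A)(d1 := Nd g', d2 := Nd g')"
  unfolding result_def by simp_all

lemma replaces_result: "replaces A {i, k} result {g', i1, i2}"
proof -
  have "relinked {i, k} {g', i1, i2} (up A y) (up result y) \<and>
      relinked {i, k} {g', i1, i2} (lo A y) (lo result y)" if y: "y \<in> fE A" "y \<noteq> e4" for y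
  proof -
    have "y \<noteq> d1" "y \<noteq> d2" using y fresh by auto
    then have "relinked {i, k} {g', i1, i2} (lo A y) (lo result y)"
      using incidence[OF y(1)] y(2) unfolding relinked_def result_fields by auto
    moreover have "relinked {i, k} {g', i1, i2} (up A y) (up result y)"
      using incidence[OF y(1)] y(2) \<open>y \<noteq> d1\<close> \<open>y \<noteq> d2\<close> distinct_edges redex_edges cocontraction(5)
      unfolding relinked_def result_fields by auto
    ultimately show ?thesis by blast
  qed
  moreover have "finite (fE A)" using wf unfolding wf_flow_def by blast
  ultimately show ?thesis
    unfolding replaces_def result_fields
    using interaction(1,2) cocontraction(1,2) redex_edges fresh distinct_edges by auto
qed

lemma result_incidence:
  "upper_edges result g' = {d1, d2}" "lower_edges result g' = {e3}"
  "upper_edges result i1 = {}" "lower_edges result i1 = {e1, d1}"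
  "upper_edges result i2 = {}" "lower_edges result i2 = {e2, d2}"
  using fresh_not_incident[OF wf _ fresh(1)] fresh_not_incident[OF wf _ fresh(2)]
    fresh_not_incident[OF wf _ fresh(3)] fresh distinct_edges redex_edges cocontraction(5)
    interaction(4)
  unfolding upper_edges_def lower_edges_def result_fields by auto

lemma redex_polarity: "\<pi> e1 = \<pi> e4" "\<pi> e2 = \<pi> e4" "\<pi> e3 \<noteq> \<pi> e4"
proof -
  have "polar_at A \<pi> i" "polar_at A \<pi> k"
    using inv interaction(1) cocontraction(1) unfolding flow_inv_def polarity_def by blast+
  then show "\<pi> e1 = \<pi> e4" "\<pi> e2 = \<pi> e4" "\<pi> e3 \<noteq> \<pi> e4"
    using polar_at_same[of A \<pi> k] polar_at_differ[of A \<pi> i] interaction cocontraction by auto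
qed

lemma redex_ranks: "\<rho> i < \<rho> k"
  "\<And>y b. y \<in> fE A \<Longrightarrow> up A y = Nd i \<Longrightarrow> lo A y = Nd b \<Longrightarrow> \<rho> i < \<rho> b"
  "\<And>y b. y \<in> fE A \<Longrightarrow> up A y = Nd k \<Longrightarrow> lo A y = Nd b \<Longrightarrow> \<rho> k < \<rho> b"
  using inv redex_edges unfolding flow_inv_def ranked_def by blast+

lemma result_agrees:
  "\<forall>y\<in>fE A. result_polarity y = \<pi> y" "\<forall>v\<in>fV A. result_rank v = \<rho> v"
  unfolding result_polarity_def result_rank_def using fresh by auto

lemma new_vertices_sound: "\<forall>v\<in>{g', i1, i2}. sound_at R result result_polarity result_rank v"
proof -
  have labels: "lab result g' = Contraction" "lab result i1 = Interaction" "lab result i2 = Interaction"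
    using fresh(4) unfolding result_fields by auto
  have polarities: "result_polarity e1" "result_polarity e2" "\<not> result_polarity e3"
    "\<not> result_polarity d1" "\<not> result_polarity d2"
    using redex_polarity positive distinct_edges fresh(7) unfolding result_polarity_def by auto
  have ranks: "result_rank g' = \<rho> i" "result_rank i1 = \<rho> i - 1" "result_rank i2 = \<rho> i - 1"
    using fresh(4) unfolding result_rank_def by auto
  have new_ends: "lo result d1 = Nd g'" "lo result d2 = Nd g'" "up result d1 = Nd i1"
    "up result d2 = Nd i2"
    using fresh(4,7) distinct_edges unfolding result_fields by auto
  have below: "\<rho> i < result_rank b" if "y \<in> {e1, e2, e3}" "lo result y = Nd b" for y b
  proof -
    have "lo A y = Nd b" using that distinct_edges unfolding result_fields by auto
    moreover have "b \<in> fV A" using calculation that redex_edges wf_lo_vertex[OF wf] by blast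
    ultimately show ?thesis
      using that redex_edges redex_ranks result_agrees(2) by fastforce
  qed
  have "sound_at R result result_polarity result_rank g'"
    using labels polarities ranks new_ends below[of e3] result_incidence(1,2) fresh(7) distinct_edges
    unfolding sound_at_def arity_ok_def polar_at_def bounded_at_def ranked_at_def positive_vertex_def
    by auto
  moreover have "sound_at R result result_polarity result_rank i1"
    using labels polarities ranks new_ends below[of e1] result_incidence(3,4) distinct_edges fresh(4)
    unfolding sound_at_def arity_ok_def polar_at_def bounded_at_def ranked_at_def
    by auto
  moreover have "sound_at R result result_polarity result_rank i2"
    using labels polarities ranks new_ends below[of e2] result_incidence(5,6) distinct_edges fresh(4)
    unfolding sound_at_def arity_ok_def polar_at_def bounded_at_def ranked_at_def
    by auto
  ultimately show ?thesis by blast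
qed

lemma new_vertices_weightless: "(\<Sum>v\<in>{g', i1, i2}. weight R result result_polarity result_rank v) = 0"
proof -
  have "\<not> positive_vertex result result_polarity g'"
    using result_incidence(2) redex_polarity(3) positive distinct_edges
    unfolding positive_vertex_def result_polarity_def by auto
  moreover have "lab result i1 = Interaction" "lab result i2 = Interaction"
    using fresh(4) unfolding result_fields by auto
  ultimately show ?thesis using fresh(4) unfolding weight_def by simp
qed

lemma positive_cocontraction_weight: "0 < weight R A \<pi> \<rho> k"
  using cocontraction(2,4) redex_polarity positive unfolding weight_def positive_vertex_def by simp

lemma reduces:
  "c_step A result \<and> flow_inv R result result_polarity result_rank \<and>
   total_weight R result result_polarity result_rank < total_weight R A \<pi> \<rho>"
proof -
  have "finite (fV A)" using wf unfolding wf_flow_def by blast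
  then have "total_weight R result result_polarity result_rank + (\<Sum>v\<in>{i, k}. weight R A \<pi> \<rho> v) =
      total_weight R A \<pi> \<rho>"
    using replaces_total_weight[OF replaces_result _ result_agrees] new_vertices_weightless by simp
  moreover have "0 < (\<Sum>v\<in>{i, k}. weight R A \<pi> \<rho> v)"
    using positive_cocontraction_weight distinct_edges(1) by simp
  ultimately show ?thesis
    using c_step_result replaces_flow_inv[OF replaces_result inv result_agrees new_vertices_sound] by linarith
qed

end

lemma c2_reduction:
  assumes inv: "flow_inv R A \<pi> \<rho>" and e: "e4 \<in> fE A" "\<pi> e4" "up A e4 = Nd i" "lo A e4 = Nd k"
    and i: "i \<in> fV A" "lab A i = Interaction" and k: "k \<in> fV A" "lab A k = Cocontraction"
  shows "\<exists>B \<pi>' \<rho>'. c_step A B \<and> flow_inv R B \<pi>' \<rho>' \<and> total_weight R B \<pi>' \<rho>' < total_weight R A \<pi> \<rho>"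
proof -
  have wf: "wf_flow A" using inv by (rule flow_inv_wf)
  obtain e3 where "e3 \<noteq> e4" "lower_edges A i = {e4, e3}"
    using wf_arity[OF wf i(1)] i(2) card_2_mem_eq lower_edgesI[OF e(1,3)] unfolding arity_ok_def
    by (metis n_lower.simps(1))
  moreover have "upper_edges A k = {e4}"
    using card_1_mem_eq[OF _ upper_edgesI[OF e(1,4)]] wf_arity[OF wf k(1)] k(2)
    unfolding arity_ok_def by simp
  moreover obtain e1 e2 where "e1 \<noteq> e2" "lower_edges A k = {e1, e2}"
    using wf_arity[OF wf k(1)] k(2) card_2_iff unfolding arity_ok_def by (metis n_lower.simps(6))
  moreover obtain f h :: "nat \<Rightarrow> nat" where "inj f" "\<forall>i. f i \<notin> fV A" "inj h" "\<forall>i. h i \<notin> fE A"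
    using fresh_injection wf unfolding wf_flow_def by metis
  ultimately interpret c2_redex R A \<pi> \<rho> i k e1 e2 e3 e4 "f 0" "f 1" "f 2" "h 0" "h 1"
    using inv i k e(2) by unfold_locales (auto simp: inj_eq)
  show ?thesis using reduces by blast
qed

lemma two_powers_of_three_less: "(a :: nat) < b \<Longrightarrow> 2 * 3 ^ a < (3 :: nat) ^ b"
proof -
  assume "a < b"
  then have "(3 :: nat) ^ Suc a \<le> 3 ^ b" by (intro power_increasing) auto
  moreover have "2 * 3 ^ a < (3 :: nat) ^ Suc a" by simp
  ultimately show ?thesis by linarith
qed

locale c3_redex =
  fixes R :: int and A :: flow and \<pi> :: "nat \<Rightarrow> bool" and \<rho> :: "nat \<Rightarrow> int"
    and g k e1 e2 e e3 e4 k1 k2 g3 g4 d13 d14 d23 d24 :: nat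
  assumes inv: "flow_inv R A \<pi> \<rho>"
    and contraction: "g \<in> fV A" "lab A g = Contraction" "upper_edges A g = {e1, e2}" "e1 \<noteq> e2"
      "lower_edges A g = {e}"
    and cocontraction: "k \<in> fV A" "lab A k = Cocontraction" "upper_edges A k = {e}"
      "lower_edges A k = {e3, e4}" "e3 \<noteq> e4"
    and positive: "\<pi> e"
    and fresh: "k1 \<notin> fV A" "k2 \<notin> fV A" "g3 \<notin> fV A" "g4 \<notin> fV A" "distinct [k1, k2, g3, g4]"
      "d13 \<notin> fE A" "d14 \<notin> fE A" "d23 \<notin> fE A" "d24 \<notin> fE A" "distinct [d13, d14, d23, d24]"
begin

definition result :: flow where
  "result = A\<lparr>fV := (fV A - {g, k}) \<union> {k1, k2, g3, g4},
     fE := (fE A - {e}) \<union> {d13, d14, d23, d24},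
     lab := (lab A)(k1 := Cocontraction, k2 := Cocontraction, g3 := Contraction, g4 := Contraction),
     up := (up A)(e3 := Nd g3, e4 := Nd g4, d13 := Nd k1, d14 := Nd k1, d23 := Nd k2, d24 := Nd k2),
     lo := (lo A)(e1 := Nd k1, e2 := Nd k2, d13 := Nd g3, d14 := Nd g4, d23 := Nd g3, d24 := Nd g4)\<rparr>"

definition result_polarity :: "nat \<Rightarrow> bool" where
  "result_polarity = \<pi>(d13 := \<pi> e, d14 := \<pi> e, d23 := \<pi> e, d24 := \<pi> e)"

definition result_rank :: "nat \<Rightarrow> int" where
  "result_rank = \<rho>(k1 := \<rho> g, k2 := \<rho> g, g3 := \<rho> k, g4 := \<rho> k)"

lemma wf: "wf_flow A"
  using inv by (rule flow_inv_wf)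

lemma redex_edges:
  "e \<in> fE A" "e1 \<in> fE A" "e2 \<in> fE A" "e3 \<in> fE A" "e4 \<in> fE A"
  "up A e = Nd g" "lo A e = Nd k" "lo A e1 = Nd g" "lo A e2 = Nd g" "up A e3 = Nd k" "up A e4 = Nd k"
  using contraction(3,5) cocontraction(3,4) unfolding upper_edges_def lower_edges_def by blast+

lemma incidence:
  assumes "y \<in> fE A"
  shows "up A y = Nd g \<longleftrightarrow> y = e" "up A y = Nd k \<longleftrightarrow> y = e3 \<or> y = e4"
    "lo A y = Nd g \<longleftrightarrow> y = e1 \<or> y = e2" "lo A y = Nd k \<longleftrightarrow> y = e"
  using assms contraction(3,5) cocontraction(3,4) unfolding upper_edges_def lower_edges_def by blast+

lemma redex_ranks: "\<rho> g < \<rho> k"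
  "\<And>y a. y \<in> fE A \<Longrightarrow> up A y = Nd a \<Longrightarrow> lo A y = Nd g \<Longrightarrow> \<rho> a < \<rho> g"
  "\<And>y b. y \<in> fE A \<Longrightarrow> up A y = Nd k \<Longrightarrow> lo A y = Nd b \<Longrightarrow> \<rho> k < \<rho> b"
  using inv redex_edges unfolding flow_inv_def ranked_def by blast+

lemma distinct_edges:
  "g \<noteq> k" "e \<noteq> e1" "e \<noteq> e2" "e \<noteq> e3" "e \<noteq> e4" "e1 \<noteq> e3" "e1 \<noteq> e4" "e2 \<noteq> e3" "e2 \<noteq> e4"
  "d13 \<notin> {e, e1, e2, e3, e4}" "d14 \<notin> {e, e1, e2, e3, e4}" "d23 \<notin> {e, e1, e2, e3, e4}"
  "d24 \<notin> {e, e1, e2, e3, e4}"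
proof -
  show "g \<noteq> k" using contraction(2) cocontraction(2) by auto
  then show "e \<noteq> e1" "e \<noteq> e2" "e \<noteq> e3" "e \<noteq> e4" using redex_edges by auto
  show "e1 \<noteq> e3" "e1 \<noteq> e4" "e2 \<noteq> e3" "e2 \<noteq> e4"
    using redex_edges redex_ranks(1) redex_ranks(3)[of _ g] by fastforce+
  show "d13 \<notin> {e, e1, e2, e3, e4}" "d14 \<notin> {e, e1, e2, e3, e4}" "d23 \<notin> {e, e1, e2, e3, e4}"
    "d24 \<notin> {e, e1, e2, e3, e4}"
    using redex_edges fresh(6-9) by auto
qed

lemma c_step_result: "c_step A result"
  unfolding c_step_def c3_step_def result_def
  using contraction cocontraction redex_edges fresh by blast

lemma result_fields:
  "fV result = (fV A - {g, k}) \<union> {k1, k2, g3, g4}" "fE result = (fE A - {e}) \<union> {d13, d14, d23, d24}"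
  "lab result = (lab A)(k1 := Cocontraction, k2 := Cocontraction, g3 := Contraction, g4 := Contraction)"
  "up result = (up A)(e3 := Nd g3, e4 := Nd g4, d13 := Nd k1, d14 := Nd k1, d23 := Nd k2, d24 := Nd k2)"
  "lo result = (lo A)(e1 := Nd k1, e2 := Nd k2, d13 := Nd g3, d14 := Nd g4, d23 := Nd g3, d24 := Nd g4)"
  unfolding result_def by simp_all

lemma replaces_result: "replaces A {g, k} result {k1, k2, g3, g4}"
proof -
  have "relinked {g, k} {k1, k2, g3, g4} (up A y) (up result y) \<and>
      relinked {g, k} {k1, k2, g3, g4} (lo A y) (lo result y)" if y: "y \<in> fE A" "y \<noteq> e" for y
  proof -
    have "y \<notin> {d13, d14, d23, d24}" using y fresh by auto
    then show ?thesis
      using incidence[OF y(1)] y(2) distinct_edges contraction(4) cocontraction(5)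
      unfolding relinked_def result_fields by auto
  qed
  moreover have "finite (fE A)" using wf unfolding wf_flow_def by blast
  ultimately show ?thesis
    unfolding replaces_def result_fields
    using contraction(1,2) cocontraction(1,2) redex_edges fresh distinct_edges by auto
qed

lemma result_incidence:
  "upper_edges result k1 = {e1}" "lower_edges result k1 = {d13, d14}"
  "upper_edges result k2 = {e2}" "lower_edges result k2 = {d23, d24}"
  "upper_edges result g3 = {d13, d23}" "lower_edges result g3 = {e3}"
  "upper_edges result g4 = {d14, d24}" "lower_edges result g4 = {e4}"
  using fresh_not_incident[OF wf _ fresh(1)] fresh_not_incident[OF wf _ fresh(2)]
    fresh_not_incident[OF wf _ fresh(3)] fresh_not_incident[OF wf _ fresh(4)]
    fresh distinct_edges redex_edges contraction(4) cocontraction(5)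
  unfolding upper_edges_def lower_edges_def result_fields by auto

lemma redex_polarity: "\<pi> e1" "\<pi> e2" "\<pi> e3" "\<pi> e4"
proof -
  have "polar_at A \<pi> g" "polar_at A \<pi> k"
    using inv contraction(1) cocontraction(1) unfolding flow_inv_def polarity_def by blast+
  then show "\<pi> e1" "\<pi> e2" "\<pi> e3" "\<pi> e4"
    using polar_at_same[of A \<pi> g] polar_at_same[of A \<pi> k] contraction cocontraction positive
    by auto
qed

lemma result_polarity_positive:
  "result_polarity e1" "result_polarity e2" "result_polarity e3" "result_polarity e4"
  "result_polarity d13" "result_polarity d14" "result_polarity d23" "result_polarity d24"
  using redex_polarity positive distinct_edges unfolding result_polarity_def by auto

lemma redex_bounds: "0 \<le> \<rho> g" "\<rho> k \<le> R"
proof -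
  have "positive_vertex A \<pi> g" "positive_vertex A \<pi> k"
    using contraction(5) cocontraction(4) positive redex_polarity unfolding positive_vertex_def by auto
  then show "0 \<le> \<rho> g" "\<rho> k \<le> R"
    using inv contraction(1,2) cocontraction(1,2) unfolding flow_inv_def bounded_at_def by auto
qed

lemma result_agrees:
  "\<forall>y\<in>fE A. result_polarity y = \<pi> y" "\<forall>v\<in>fV A. result_rank v = \<rho> v"
  unfolding result_polarity_def result_rank_def using fresh by auto

lemma new_vertices_sound: "\<forall>v\<in>{k1, k2, g3, g4}. sound_at R result result_polarity result_rank v"
proof -
  have labels: "lab result k1 = Cocontraction" "lab result k2 = Cocontraction"
    "lab result g3 = Contraction" "lab result g4 = Contraction"
    using fresh(5) unfolding result_fields by auto
  have ranks: "result_rank k1 = \<rho> g" "result_rank k2 = \<rho> g" "result_rank g3 = \<rho> k"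
    "result_rank g4 = \<rho> k"
    using fresh(5) unfolding result_rank_def by auto
  have new_ends: "up result d13 = Nd k1" "up result d14 = Nd k1" "up result d23 = Nd k2"
    "up result d24 = Nd k2" "lo result d13 = Nd g3" "lo result d14 = Nd g4" "lo result d23 = Nd g3"
    "lo result d24 = Nd g4"
    using fresh(5,10) unfolding result_fields by auto
  have above: "result_rank a < \<rho> g" if "y \<in> {e1, e2}" "up result y = Nd a" for y a
  proof -
    have "up A y = Nd a" using that distinct_edges unfolding result_fields by auto
    moreover have "a \<in> fV A" using calculation that redex_edges wf_up_vertex[OF wf] by blast
    ultimately show ?thesis using that redex_edges redex_ranks result_agrees(2) by fastforce
  qed
  have below: "\<rho> k < result_rank b" if "y \<in> {e3, e4}" "lo result y = Nd b" for y b
  proof -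
    have "lo A y = Nd b" using that distinct_edges unfolding result_fields by auto
    moreover have "b \<in> fV A" using calculation that redex_edges wf_lo_vertex[OF wf] by blast
    ultimately show ?thesis using that redex_edges redex_ranks result_agrees(2) by fastforce
  qed
  have bounds: "0 \<le> \<rho> g" "\<rho> g \<le> R" "0 \<le> \<rho> k" "\<rho> k \<le> R"
    using redex_bounds redex_ranks(1) by auto
  have "sound_at R result result_polarity result_rank k1"
    using labels result_polarity_positive ranks new_ends above[of e1] bounds redex_ranks(1) result_incidence(1,2) fresh(10)
    unfolding sound_at_def arity_ok_def polar_at_def bounded_at_def ranked_at_def by auto
  moreover have "sound_at R result result_polarity result_rank k2"
    using labels result_polarity_positive ranks new_ends above[of e2] bounds redex_ranks(1) result_incidence(3,4) fresh(10)
    unfolding sound_at_def arity_ok_def polar_at_def bounded_at_def ranked_at_def by auto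
  moreover have "sound_at R result result_polarity result_rank g3"
    using labels result_polarity_positive ranks new_ends below[of e3] bounds redex_ranks(1) result_incidence(5,6) fresh(10)
    unfolding sound_at_def arity_ok_def polar_at_def bounded_at_def ranked_at_def by auto
  moreover have "sound_at R result result_polarity result_rank g4"
    using labels result_polarity_positive ranks new_ends below[of e4] bounds redex_ranks(1) result_incidence(7,8) fresh(10)
    unfolding sound_at_def arity_ok_def polar_at_def bounded_at_def ranked_at_def by auto
  ultimately show ?thesis by blast
qed

lemma weights:
  "(\<Sum>v\<in>{k1, k2, g3, g4}. weight R result result_polarity result_rank v) =
     2 * 3 ^ nat (\<rho> g) + 2 * 3 ^ nat (R - \<rho> k)"
  "(\<Sum>v\<in>{g, k}. weight R A \<pi> \<rho> v) = 3 ^ nat (R - \<rho> g) + 3 ^ nat (\<rho> k)"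
proof -
  have "positive_vertex result result_polarity v" if "v \<in> {k1, k2, g3, g4}" for v
    using that result_incidence(2,4,6,8) result_polarity_positive unfolding positive_vertex_def
    by auto
  moreover have "lab result k1 = Cocontraction" "lab result k2 = Cocontraction"
    "lab result g3 = Contraction" "lab result g4 = Contraction"
    using fresh(5) unfolding result_fields by auto
  moreover have "result_rank k1 = \<rho> g" "result_rank k2 = \<rho> g" "result_rank g3 = \<rho> k"
    "result_rank g4 = \<rho> k"
    using fresh(5) unfolding result_rank_def by auto
  ultimately show "(\<Sum>v\<in>{k1, k2, g3, g4}. weight R result result_polarity result_rank v) =
     2 * 3 ^ nat (\<rho> g) + 2 * 3 ^ nat (R - \<rho> k)"
    using fresh(5) unfolding weight_def by simp
  have "positive_vertex A \<pi> g" "positive_vertex A \<pi> k"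
    using contraction(5) cocontraction(4) positive redex_polarity unfolding positive_vertex_def by auto
  then show "(\<Sum>v\<in>{g, k}. weight R A \<pi> \<rho> v) = 3 ^ nat (R - \<rho> g) + 3 ^ nat (\<rho> k)"
    using contraction(2) cocontraction(2) distinct_edges(1) unfolding weight_def by simp
qed

lemma reduces:
  "c_step A result \<and> flow_inv R result result_polarity result_rank \<and>
   total_weight R result result_polarity result_rank < total_weight R A \<pi> \<rho>"
proof -
  have "finite (fV A)" using wf unfolding wf_flow_def by blast
  then have "total_weight R result result_polarity result_rank + (\<Sum>v\<in>{g, k}. weight R A \<pi> \<rho> v) =
      total_weight R A \<pi> \<rho> + (\<Sum>v\<in>{k1, k2, g3, g4}. weight R result result_polarity result_rank v)"
    using replaces_total_weight[OF replaces_result _ result_agrees] by simp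
  moreover have "2 * 3 ^ nat (\<rho> g) < (3::nat) ^ nat (\<rho> k)"
    "2 * 3 ^ nat (R - \<rho> k) < (3::nat) ^ nat (R - \<rho> g)"
    using two_powers_of_three_less redex_ranks(1) redex_bounds by auto
  ultimately show ?thesis
    using c_step_result replaces_flow_inv[OF replaces_result inv result_agrees new_vertices_sound] weights by linarith
qed

end

lemma c3_reduction:
  assumes inv: "flow_inv R A \<pi> \<rho>" and e: "e \<in> fE A" "\<pi> e" "up A e = Nd g" "lo A e = Nd k"
    and g: "g \<in> fV A" "lab A g = Contraction" and k: "k \<in> fV A" "lab A k = Cocontraction"
  shows "\<exists>B \<pi>' \<rho>'. c_step A B \<and> flow_inv R B \<pi>' \<rho>' \<and> total_weight R B \<pi>' \<rho>' < total_weight R A \<pi> \<rho>"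
proof -
  have wf: "wf_flow A" using inv by (rule flow_inv_wf)
  obtain e1 e2 where "e1 \<noteq> e2" "upper_edges A g = {e1, e2}"
    using wf_arity[OF wf g(1)] g(2) card_2_iff unfolding arity_ok_def by (metis n_upper.simps(5))
  moreover have "lower_edges A g = {e}"
    using card_1_mem_eq[OF _ lower_edgesI[OF e(1,3)]] wf_arity[OF wf g(1)] g(2)
    unfolding arity_ok_def by simp
  moreover have "upper_edges A k = {e}"
    using card_1_mem_eq[OF _ upper_edgesI[OF e(1,4)]] wf_arity[OF wf k(1)] k(2)
    unfolding arity_ok_def by simp
  moreover obtain e3 e4 where "e3 \<noteq> e4" "lower_edges A k = {e3, e4}"
    using wf_arity[OF wf k(1)] k(2) card_2_iff unfolding arity_ok_def by (metis n_lower.simps(6))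
  moreover obtain f h :: "nat \<Rightarrow> nat" where "inj f" "\<forall>i. f i \<notin> fV A" "inj h" "\<forall>i. h i \<notin> fE A"
    using fresh_injection wf unfolding wf_flow_def by metis
  ultimately interpret c3_redex R A \<pi> \<rho> g k e1 e2 e e3 e4 "f 0" "f 1" "f 2" "f 3" "h 0" "h 1" "h 2" "h 3"
    using inv g k e(2) by unfold_locales (auto simp: inj_eq)
  show ?thesis using reduces by blast
qed

section \<open>Normalisation\<close>

lemma positive_redex_reduction:
  assumes inv: "flow_inv R A \<pi> \<rho>" and "positive_redex A \<pi>"
  shows "\<exists>B \<pi>' \<rho>'. c_step A B \<and> flow_inv R B \<pi>' \<rho>' \<and> total_weight R B \<pi>' \<rho>' < total_weight R A \<pi> \<rho>"
proof -
  obtain e u v where e: "e \<in> fE A" "\<pi> e" "up A e = Nd u" "lo A e = Nd v"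
    and u: "u \<in> fV A" and v: "v \<in> fV A"
    and labels: "(lab A u, lab A v) \<in> {(Contraction, Cut), (Interaction, Cocontraction), (Contraction, Cocontraction)}"
    using assms(2) unfolding positive_redex_def by blast
  from labels consider "lab A u = Contraction" "lab A v = Cut"
    | "lab A u = Interaction" "lab A v = Cocontraction"
    | "lab A u = Contraction" "lab A v = Cocontraction" by auto
  then show ?thesis
  proof cases
    case 1
    show ?thesis by (rule c1_reduction[OF inv e u 1(1) v 1(2)])
  next
    case 2
    show ?thesis by (rule c2_reduction[OF inv e u 2(1) v 2(2)])
  next
    case 3
    show ?thesis by (rule c3_reduction[OF inv e u 3(1) v 3(2)])
  qed
qed

lemma normalise_positive_redexes:
  assumes "flow_inv R A \<pi> \<rho>"
  shows "\<exists>B \<pi>' \<rho>'. c_step\<^sup>*\<^sup>* A B \<and> flow_inv R B \<pi>' \<rho>' \<and> \<not> positive_redex B \<pi>'"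
  using assms
proof (induction "total_weight R A \<pi> \<rho>" arbitrary: A \<pi> \<rho> rule: less_induct)
  case less
  show ?case
  proof (cases "positive_redex A \<pi>")
    case True
    then obtain B \<pi>' \<rho>' where B: "c_step A B" "flow_inv R B \<pi>' \<rho>'"
      "total_weight R B \<pi>' \<rho>' < total_weight R A \<pi> \<rho>"
      using positive_redex_reduction less.prems by blast
    then obtain C \<pi>'' \<rho>'' where "c_step\<^sup>*\<^sup>* B C" "flow_inv R C \<pi>'' \<rho>''" "\<not> positive_redex C \<pi>''"
      using less.hyps by blast
    then show ?thesis using B(1) converse_rtranclp_into_rtranclp by metis
  qed (use less.prems in blast)
qed

theorem theorem4p24:
  assumes "atomic_flow A"
  shows "\<exists>B. atomic_flow B \<and> c_step\<^sup>*\<^sup>* A B \<and>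
              (\<forall>v xs. aicycle B v xs \<longrightarrow> fragile_cycle B v xs)"
proof -
  obtain R \<pi> \<rho> where "flow_inv R A \<pi> \<rho>" using atomic_flow_inv[OF assms] by blast
  then obtain B \<pi>' \<rho>' where steps: "c_step\<^sup>*\<^sup>* A B" and inv: "flow_inv R B \<pi>' \<rho>'"
    and irreducible: "\<not> positive_redex B \<pi>'"
    using normalise_positive_redexes by blast
  have "fragile_cycle B v xs" if "aicycle B v xs" for v xs
    using aicycle_fragile[OF flow_inv_wf[OF inv] flow_inv_acyclic[OF inv] flow_inv_polarity[OF inv]
        irreducible that] .
  then show ?thesis using flow_inv_atomic_flow[OF inv] steps by blast
qed

end
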